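(* Let $\Gamma$ be a compact subset of $\mathbb C\setminus\mathbf a(\mathbb S^1)$. Uniformly over $z,z'\in\Gamma$, as $n\to\infty$, $$\theta_n(z,z')\to\theta(z,z'),\quad\mathcal A_n(z,z')\to\mathcal A(z,z'),\quad\mathcal B_n(z,z')\to\mathcal B(z,z').$$ If $U_n=F_n$ for all $n$ and $\varepsilon=1$, or if $U_n$ is a real orthogonal matrix for all $n$ and $\varepsilon=-1$, then uniformly over $z,z'\in\Gamma$, $$\theta'_n(z,z')\to\theta_\varepsilon(z,z'),\quad\mathcal A'_n(z,z')\to\mathcal A_\varepsilon(z,z'),\quad\mathcal B'_n(z,z')\to\mathcal B_\varepsilon(z,z').$$
   Context: Fix integers $r\ge0,s\ge1$, complex $a_{-r},\dots,a_s$ with $a_s\ne0$, $\mathbf a(\lambda)=\sum_{k=-r}^sa_k\lambda^k$. For $n>r+s$, $C_n(\mathbf a)$ is the circulant matrix with $(i,j)$ entry $a_k$ if $j-i\equiv k\pmod n$ for some $k\in\{-r,\dots,s\}$, $0$ otherwise; $R'_n(z)=(z-C_n(\mathbf a))^{-1}$; $F_n$ is the Fourier matrix $(F_n)_{ij}=n^{-1/2}e^{2i\pi(i-1)(j-1)/n}$; $U_n$ is a deterministic unitary matrix. $D_r$ upper triangular with $(D_r)_{pq}=a_{-r+q-p}$ ($q\ge p$); $E_s$ lower triangular with $(E_s)_{pq}=a_{s-p+q}$ ($p\ge q$); $P_n\in M_{n,r+s}(\mathbb C)$ has block rows (heights $r,n-r-s,s$) $(0_{r\times s}\ I_r)$,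 $0$, $(E_s\ 0_{s\times r})$; $Q_n\in M_{r+s,n}(\mathbb C)$ has block rows (heights $s,r$) $(I_s\ 0\ 0_{s\times r})$, $(0_{r\times s}\ 0\ D_r)$. $\mathcal F(\omega)=(\omega^{p-q})_{p,q\le r+s}$, $\mathcal D=\mathrm{diag}(I_s,D_r)$, $\mathcal E=\mathrm{diag}(E_s,I_r)$. Finite-$n$ quantities: $\theta_n(z,z')=\frac1n\operatorname{Tr}R'_n(z)R'_n(z')^*$, $\mathcal A_n(z,z')=Q_nR'_n(z)R'_n(z')^*Q_n^*$, $\mathcal B_n(z,z')=P_n^*R'_n(z')^*R'_n(z)P_n$, $\theta'_n(z,z')=\frac1n\operatorname{Tr}U_n^*R'_n(z)U_nU_n^\intercal R'_n(z')^\intercal\bar U_n$, $\mathcal A'_n(z,z')=Q_nR'_n(z)U_nU_n^\intercal R'_n(z')^\intercal Q_n^\intercal$, $\mathcal B'_n(z,z')=P_n^\intercal R'_n(z')^\intercal\bar U_nU_n^*R'_n(z)P_n$. Limits: write $\oint g(\omega)d\omega$ for $\frac1{2\pi}\int_0^{2\pi}g(e^{it})e^{it}dt$. $\theta(z,z')=\oint\frac{d\omega}{\omega(z-\mathbf a(\omega))\overline{(z'-\mathbf a(\omega))}}$, $\mathcal A(z,z')=\mathcal D\oint\mathrm{diag}(I_s,\omega^{-(r+s)}I_r)\mathcal F(\omega)\mathrm{diag}(I_s,\omega^{r+s}I_r)\frac{d\omega}{\omega(z-\mathbf a(\omega))\overline{(z'-\mathbf a(\omega))}}\mathcal D^*$,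 $\mathcal B(z,z')=\mathcal E^*\oint\mathcal F(\omega)\frac{d\omega}{\omega(z-\mathbf a(\omega))\overline{(z'-\mathbf a(\omega))}}\mathcal E$; for $\varepsilon\in\{\pm1\}$, $\theta_\varepsilon(z,z')=\oint\frac{d\omega}{\omega(z-\mathbf a(\omega))(z'-\mathbf a(\omega^\varepsilon))}$, $\mathcal A_\varepsilon(z,z')=\mathcal D\oint\mathrm{diag}(I_s,\omega^{-(r+s)}I_r)\mathcal F_\varepsilon(\omega)\mathrm{diag}(I_s,\omega^{-\varepsilon(r+s)}I_r)\frac{d\omega}{\omega(z-\mathbf a(\omega))(z'-\mathbf a(\omega^\varepsilon))}\mathcal D^\intercal$ with $\mathcal F_{-1}=\mathcal F$, $\mathcal F_1(\omega)_{pq}=\omega^{p+q-2}$; $\mathcal B_\varepsilon(z,z')=\mathcal E^\intercal\oint\mathcal F'_\varepsilon(\omega)\frac{d\omega}{\omega(z-\mathbf a(\omega))(z'-\mathbf a(\omega^\varepsilon))}\mathcal E$ with $\mathcal F'_{-1}=\mathcal F$, $\mathcal F'_1(\omega)_{pq}=\omega^{2s+2-(p+q)}$. *)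

theory Defs
  imports "HOL-Analysis.Analysis" "Jordan_Normal_Form.Gauss_Jordan_Elimination"
begin

text \<open>Matrices are Jordan_Normal_Form matrices with 0-based indices. The coefficient
  sequence a_{-r},...,a_s is a function  a :: int => complex  (values outside -r..s unused).\<close>

definition symb :: "nat \<Rightarrow> nat \<Rightarrow> (int \<Rightarrow> complex) \<Rightarrow> complex \<Rightarrow> complex" where
  "symb r s a w = (\<Sum>k\<in>{-int r..int s}. a k * w powi k)"

text \<open>Circulant matrix C_n(a): entry (i,j) is a_k where j - i = k (mod n), k in -r..s
  (for n > r+s at most one such k exists, so the sum has at most one nonzero term).\<close>
definition circ :: "nat \<Rightarrow> nat \<Rightarrow> (int \<Rightarrow> complex) \<Rightarrow> nat \<Rightarrow> complex mat" where
  "circ r s a n = mat n n (\<lambda>(i,j). \<Sum>k\<in>{-int r..int s}.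
      if (int j - int i) mod int n = k mod int n then a k else 0)"

definition resolv :: "nat \<Rightarrow> nat \<Rightarrow> (int \<Rightarrow> complex) \<Rightarrow> nat \<Rightarrow> complex \<Rightarrow> complex mat" where
  "resolv r s a n z = the (mat_inverse (z \<cdot>\<^sub>m 1\<^sub>m n - circ r s a n))"

definition adj :: "complex mat \<Rightarrow> complex mat" where
  "adj A = transpose_mat (map_mat cnj A)"

definition cmat :: "complex mat \<Rightarrow> complex mat" where
  "cmat A = map_mat cnj A"

definition tr :: "complex mat \<Rightarrow> complex" where
  "tr A = (\<Sum>i<dim_row A. A $$ (i,i))"

definition fourier :: "nat \<Rightarrow> complex mat" where
  "fourier n = mat n n (\<lambda>(i,j). exp (2 * \<i> * pi * of_nat i * of_nat j / of_nat n) / sqrt (real n))"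

definition unitary_cmat :: "nat \<Rightarrow> complex mat \<Rightarrow> bool" where
  "unitary_cmat n U \<longleftrightarrow> U \<in> carrier_mat n n \<and> U * adj U = 1\<^sub>m n \<and> adj U * U = 1\<^sub>m n"

definition real_orthogonal_cmat :: "nat \<Rightarrow> complex mat \<Rightarrow> bool" where
  "real_orthogonal_cmat n U \<longleftrightarrow> U \<in> carrier_mat n n \<and> (\<forall>i<n. \<forall>j<n. U $$ (i,j) \<in> \<real>)
     \<and> U * transpose_mat U = 1\<^sub>m n \<and> transpose_mat U * U = 1\<^sub>m n"

definition Dr :: "nat \<Rightarrow> (int \<Rightarrow> complex) \<Rightarrow> complex mat" where
  "Dr r a = mat r r (\<lambda>(p,q). if q \<ge> p then a (- int r + int q - int p) else 0)"

definition Es :: "nat \<Rightarrow> (int \<Rightarrow> complex) \<Rightarrow> complex mat" where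
  "Es s a = mat s s (\<lambda>(p,q). if p \<ge> q then a (int s - int p + int q) else 0)"

definition Pn :: "nat \<Rightarrow> nat \<Rightarrow> (int \<Rightarrow> complex) \<Rightarrow> nat \<Rightarrow> complex mat" where
  "Pn r s a n = mat n (r+s) (\<lambda>(i,j).
      if i < r then (if j = s + i then 1 else 0)
      else if i < n - s then 0
      else (if j < s then Es s a $$ (i - (n - s), j) else 0))"

definition Qn :: "nat \<Rightarrow> nat \<Rightarrow> (int \<Rightarrow> complex) \<Rightarrow> nat \<Rightarrow> complex mat" where
  "Qn r s a n = mat (r+s) n (\<lambda>(i,j).
      if i < s then (if j = i then 1 else 0)
      else (if j \<ge> n - r then Dr r a $$ (i - s, j - (n - r)) else 0))"

definition calD :: "nat \<Rightarrow> nat \<Rightarrow> (int \<Rightarrow> complex) \<Rightarrow> complex mat" where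
  "calD r s a = mat (r+s) (r+s) (\<lambda>(p,q).
      if p < s \<and> q < s then (if p = q then 1 else 0)
      else if s \<le> p \<and> s \<le> q then Dr r a $$ (p - s, q - s) else 0)"

definition calE :: "nat \<Rightarrow> nat \<Rightarrow> (int \<Rightarrow> complex) \<Rightarrow> complex mat" where
  "calE r s a = mat (r+s) (r+s) (\<lambda>(p,q).
      if p < s \<and> q < s then Es s a $$ (p, q)
      else if s \<le> p \<and> s \<le> q then (if p = q then 1 else 0) else 0)"

definition oint :: "(complex \<Rightarrow> complex) \<Rightarrow> complex" where
  "oint g = integral {0..2*pi} (\<lambda>t. g (cis t) * cis t) / (2 * pi)"

definition moint :: "nat \<Rightarrow> (complex \<Rightarrow> complex mat) \<Rightarrow> complex mat" where
  "moint k G = mat k k (\<lambda>(p,q). oint (\<lambda>\<omega>. G \<omega> $$ (p,q)))"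

definition dgm :: "nat \<Rightarrow> nat \<Rightarrow> complex \<Rightarrow> complex mat" where
  "dgm r s c = mat (r+s) (r+s) (\<lambda>(p,q). if p = q then (if p < s then 1 else c) else 0)"

text \<open>F(omega), F_1(omega), F'_1(omega) with 1-based exponents translated to 0-based indices.\<close>
definition calF :: "nat \<Rightarrow> complex \<Rightarrow> complex mat" where
  "calF k \<omega> = mat k k (\<lambda>(p,q). \<omega> powi (int p - int q))"

definition calF1 :: "nat \<Rightarrow> complex \<Rightarrow> complex mat" where
  "calF1 k \<omega> = mat k k (\<lambda>(p,q). \<omega> powi (int (p+1) + int (q+1) - 2))"

definition calF1' :: "nat \<Rightarrow> nat \<Rightarrow> complex \<Rightarrow> complex mat" where
  "calF1' k s \<omega> = mat k k (\<lambda>(p,q). \<omega> powi (2 * int s + 2 - (int (p+1) + int (q+1))))"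

definition calFeps :: "int \<Rightarrow> nat \<Rightarrow> complex \<Rightarrow> complex mat" where
  "calFeps e k \<omega> = (if e = -1 then calF k \<omega> else calF1 k \<omega>)"

definition calFeps' :: "int \<Rightarrow> nat \<Rightarrow> nat \<Rightarrow> complex \<Rightarrow> complex mat" where
  "calFeps' e k s \<omega> = (if e = -1 then calF k \<omega> else calF1' k s \<omega>)"

definition theta_n where
  "theta_n r s a n z z' = tr (resolv r s a n z * adj (resolv r s a n z')) / of_nat n"

definition A_n where
  "A_n r s a n z z' = Qn r s a n * resolv r s a n z * adj (resolv r s a n z') * adj (Qn r s a n)"

definition B_n where
  "B_n r s a n z z' = adj (Pn r s a n) * adj (resolv r s a n z') * resolv r s a n z * Pn r s a n"

definition theta'_n where
  "theta'_n r s a U n z z' = tr (adj U * resolv r s a n z * U * transpose_mat U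
       * transpose_mat (resolv r s a n z') * cmat U) / of_nat n"

definition A'_n where
  "A'_n r s a U n z z' = Qn r s a n * resolv r s a n z * U * transpose_mat U
       * transpose_mat (resolv r s a n z') * transpose_mat (Qn r s a n)"

definition B'_n where
  "B'_n r s a U n z z' = transpose_mat (Pn r s a n) * transpose_mat (resolv r s a n z')
       * cmat U * adj U * resolv r s a n z * Pn r s a n"

definition theta_lim where
  "theta_lim r s a z z' = oint (\<lambda>\<omega>. 1 / (\<omega> * (z - symb r s a \<omega>) * cnj (z' - symb r s a \<omega>)))"

definition A_lim where
  "A_lim r s a z z' = calD r s a *
     moint (r+s) (\<lambda>\<omega>. (1 / (\<omega> * (z - symb r s a \<omega>) * cnj (z' - symb r s a \<omega>))) \<cdot>\<^sub>m
        (dgm r s (\<omega> powi (- int (r+s))) * calF (r+s) \<omega> * dgm r s (\<omega> powi (int (r+s)))))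
     * adj (calD r s a)"

definition B_lim where
  "B_lim r s a z z' = adj (calE r s a) *
     moint (r+s) (\<lambda>\<omega>. (1 / (\<omega> * (z - symb r s a \<omega>) * cnj (z' - symb r s a \<omega>))) \<cdot>\<^sub>m calF (r+s) \<omega>)
     * calE r s a"

definition theta_eps where
  "theta_eps e r s a z z' = oint (\<lambda>\<omega>. 1 / (\<omega> * (z - symb r s a \<omega>) * (z' - symb r s a (\<omega> powi e))))"

definition A_eps where
  "A_eps e r s a z z' = calD r s a *
     moint (r+s) (\<lambda>\<omega>. (1 / (\<omega> * (z - symb r s a \<omega>) * (z' - symb r s a (\<omega> powi e)))) \<cdot>\<^sub>m
        (dgm r s (\<omega> powi (- int (r+s))) * calFeps e (r+s) \<omega> * dgm r s (\<omega> powi (- e * int (r+s)))))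
     * transpose_mat (calD r s a)"

definition B_eps where
  "B_eps e r s a z z' = transpose_mat (calE r s a) *
     moint (r+s) (\<lambda>\<omega>. (1 / (\<omega> * (z - symb r s a \<omega>) * (z' - symb r s a (\<omega> powi e)))) \<cdot>\<^sub>m calFeps' e (r+s) s \<omega>)
     * calE r s a"

definition unif_conv :: "complex set \<Rightarrow> (nat \<Rightarrow> complex \<Rightarrow> complex \<Rightarrow> complex) \<Rightarrow> (complex \<Rightarrow> complex \<Rightarrow> complex) \<Rightarrow> bool" where
  "unif_conv \<Gamma> f g \<longleftrightarrow> (\<forall>\<epsilon>>0. \<exists>N. \<forall>n\<ge>N. \<forall>z\<in>\<Gamma>. \<forall>z'\<in>\<Gamma>. norm (f n z z' - g z z') < \<epsilon>)"

text \<open>For fixed-size (k x k) matrices, entrywise uniform convergence (equivalent to uniform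
  convergence in any matrix norm).\<close>
definition unif_conv_mat :: "nat \<Rightarrow> complex set \<Rightarrow> (nat \<Rightarrow> complex \<Rightarrow> complex \<Rightarrow> complex mat) \<Rightarrow> (complex \<Rightarrow> complex \<Rightarrow> complex mat) \<Rightarrow> bool" where
  "unif_conv_mat k \<Gamma> F G \<longleftrightarrow> (\<forall>p<k. \<forall>q<k. unif_conv \<Gamma> (\<lambda>n z z'. F n z z' $$ (p,q)) (\<lambda>z z'. G z z' $$ (p,q)))"

end

theory Submission
  imports Defs
begin

text \<open>
  The circulant C_n(a) is diagonalised by the discrete Fourier transform, so the resolvent
  R'_n(z) is the circulant whose eigenvalues are 1/(z - a(w)) at the n-th roots of unity w.
  Circulants multiply like their symbols, and the only other matrices that occur, U_n U_n^T and
  its conjugate, are either the identity or (for U_n = F_n) the reversal j -> -j mod n. The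
  reversal turns circulants into "anti-circulants", and products of circulants and
  anti-circulants are again of one of the two kinds, with symbols multiplied up to w -> cnj w.
  As Q_n and P_n only see r + s coordinates at the two ends of C^n, every finite-n quantity is
  a fixed-size matrix whose entries are discrete Fourier coefficients (1/n) sum_w g(w) w^d of a
  kernel g that is continuous on Gamma x Gamma x S^1. These are Riemann sums of the contour
  integrals defining the limits, and uniform continuity of g on this compact set makes the
  convergence uniform in (z, z').
\<close>

section \<open>Discrete Fourier coefficients\<close>

definition root_unity :: "nat \<Rightarrow> nat \<Rightarrow> complex" where
  "root_unity n m = cis (2 * pi * real m / real n)"

lemma root_unity_nonzero [simp]: "root_unity n m \<noteq> 0"
  by (simp add: root_unity_def)

lemma norm_root_unity [simp]: "norm (root_unity n m) = 1"
  by (simp add: root_unity_def)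

lemma cnj_root_unity: "cnj (root_unity n m) = inverse (root_unity n m)"
  by (simp add: root_unity_def cis_cnj)

lemma root_unity_powi: "root_unity n m powi d = cis (2 * pi * real m * of_int d / real n)"
  unfolding root_unity_def cis_power_int by (simp add: algebra_simps)

lemma root_unity_powi_mod:
  assumes "n > 0"
  shows "root_unity n m powi (d mod int n) = root_unity n m powi d"
proof -
  have "root_unity n m powi (int n * k) = 1" for k
  proof -
    have "real m * of_int k \<in> \<int>" by simp
    then have "cis (2 * pi * (real m * of_int k)) = 1" by (rule cis_multiple_2pi)
    then show ?thesis unfolding root_unity_powi using assms by (simp add: mult_ac)
  qed
  moreover have "d = d mod int n + int n * (d div int n)" by simp
  ultimately show ?thesis
    by (metis mult_1_right power_int_add root_unity_nonzero)
qed

lemma sum_root_unity_powi: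
  assumes n: "n > 0"
  shows "(\<Sum>m<n. root_unity n m powi d) = (if int n dvd d then of_nat n else 0)"
proof -
  define q where "q = root_unity n 1 powi d"
  have powers: "root_unity n m powi d = q ^ m" for m
    unfolding q_def root_unity_powi Complex.DeMoivre by (simp add: mult_ac)
  show ?thesis
  proof (cases "int n dvd d")
    case True
    then have "root_unity n m powi d = 1" for m
      using root_unity_powi_mod[OF n, of m d] by simp
    with True show ?thesis by simp
  next
    case False
    have "q \<noteq> 1"
    proof
      assume "q = 1"
      then have "cos (2 * pi * of_int d / real n) = 1"
        unfolding q_def root_unity_powi
        by (metis cis.sel(1) mult_1_right of_nat_1 one_complex.sel(1))
      then obtain k :: int where "2 * pi * of_int d / real n = of_int k * 2 * pi"
        using cos_one_2pi_int by blast
      then have "of_int d = real n * of_int k" using n by (simp add: field_simps)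
      then have "d = int n * k" by (metis of_int_eq_iff of_int_mult of_int_of_nat_eq)
      with False show False by simp
    qed
    moreover have "q ^ n = 1"
      using powers[of n] root_unity_powi_mod[OF n, of n d] n
      by (simp add: root_unity_def)
    ultimately show ?thesis
      using False by (simp add: powers sum_gp_strict)
  qed
qed

lemma sum_root_unity_orthogonal:
  assumes n: "n > 0" and "m < n" "m' < n"
  shows "(\<Sum>l<n. root_unity n m powi (- int l) * root_unity n m' powi int l)
       = (if m = m' then of_nat n else 0)"
proof -
  have "root_unity n m powi (- int l) * root_unity n m' powi int l
      = root_unity n l powi (int m' - int m)" for l
    unfolding root_unity_powi cis_mult by (simp add: field_simps diff_divide_distrib)
  moreover have "int n dvd (int m' - int m) \<longleftrightarrow> m = m'"
    using assms by (auto simp flip: mod_eq_dvd_iff)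
  ultimately show ?thesis using sum_root_unity_powi[OF n] by simp
qed

lemma sum_root_unity_cnj:
  assumes n: "n > 0"
  shows "(\<Sum>m<n. F (cnj (root_unity n m))) = (\<Sum>m<n. F (root_unity n m))"
proof -
  have roots: "bij_betw (root_unity n) {..<n} {z. z ^ n = 1}"
    unfolding root_unity_def by (rule Complex.bij_betw_roots_unity[OF n])
  have "bij_betw cnj {z::complex. z ^ n = 1} {z. z ^ n = 1}"
    by (rule bij_betw_byWitness[where f' = cnj]) (auto simp flip: complex_cnj_power)
  then have "(\<Sum>z | z ^ n = 1. F (cnj z)) = (\<Sum>z | z ^ n = 1. F z)"
    by (rule sum.reindex_bij_betw)
  then show ?thesis
    using sum.reindex_bij_betw[OF roots, of F] sum.reindex_bij_betw[OF roots, of "\<lambda>z. F (cnj z)"]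
    by simp
qed

definition dft_coeff :: "nat \<Rightarrow> (complex \<Rightarrow> complex) \<Rightarrow> int \<Rightarrow> complex" where
  "dft_coeff n f d = (\<Sum>m<n. f (root_unity n m) * root_unity n m powi d) / of_nat n"

lemma dft_coeff_cong:
  "(\<And>m. m < n \<Longrightarrow> f (root_unity n m) = g (root_unity n m)) \<Longrightarrow> dft_coeff n f d = dft_coeff n g d"
  unfolding dft_coeff_def by (auto intro!: sum.cong)

lemma dft_coeff_mod:
  assumes "n > 0" and "d mod int n = d' mod int n"
  shows "dft_coeff n f d = dft_coeff n f d'"
  unfolding dft_coeff_def using root_unity_powi_mod[OF assms(1)] assms(2) by metis

lemma dft_coeff_one:
  assumes "n > 0"
  shows "dft_coeff n (\<lambda>_. 1) d = (if int n dvd d then 1 else 0)"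
  unfolding dft_coeff_def using sum_root_unity_powi[OF assms] assms by simp

lemma dft_coeff_uminus:
  assumes "n > 0"
  shows "dft_coeff n f (- d) = dft_coeff n (\<lambda>w. f (cnj w)) d"
proof -
  have "cnj (root_unity n m) powi d = root_unity n m powi (- d)" for m
    by (simp add: cnj_root_unity power_int_inverse power_int_minus)
  then show ?thesis
    unfolding dft_coeff_def
    using sum_root_unity_cnj[OF assms, of "\<lambda>w. f (cnj w) * w powi d"] by simp
qed

lemma dft_coeff_reflect:
  assumes "n > 0"
  shows "dft_coeff n f d = dft_coeff n (\<lambda>w. f (cnj w)) (- d)"
  using dft_coeff_uminus[OF assms, of f "- d"] by simp

lemma cnj_dft_coeff: "cnj (dft_coeff n f d) = dft_coeff n (\<lambda>w. cnj (f w)) (- d)"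
  unfolding dft_coeff_def
  by (simp add: cnj_root_unity power_int_inverse power_int_minus)

lemma dft_coeff_convolution:
  assumes n: "n > 0"
  shows "(\<Sum>l<n. dft_coeff n f (a - int l) * dft_coeff n g (int l + b))
      = dft_coeff n (\<lambda>w. f w * g w) (a + b)"
proof -
  let ?w = "root_unity n"
  let ?c = "\<lambda>m m'. f (?w m) * g (?w m') * ?w m powi a * ?w m' powi b"
  let ?e = "\<lambda>l m m'. ?w m powi (- int l) * ?w m' powi int l"
  have summand: "f (?w m) * ?w m powi (a - int l) * (g (?w m') * ?w m' powi (int l + b))
      = ?c m m' * ?e l m m'" for m m' l
    by (simp only: diff_conv_add_uminus power_int_add root_unity_nonzero simp_thms)
        (simp add: mult_ac)
  have "(\<Sum>l<n. dft_coeff n f (a - int l) * dft_coeff n g (int l + b))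
      = (\<Sum>l<n. \<Sum>m<n. \<Sum>m'<n. f (?w m) * ?w m powi (a - int l) * (g (?w m') * ?w m' powi (int l + b)))
        / (of_nat n * of_nat n)"
    unfolding dft_coeff_def by (simp add: sum_product sum_divide_distrib)
  also have "\<dots> = (\<Sum>m<n. \<Sum>m'<n. \<Sum>l<n. ?c m m' * ?e l m m') / (of_nat n * of_nat n)"
    unfolding summand
    by (subst sum.swap, rule arg_cong[where f = "\<lambda>x. x / _"], rule sum.cong[OF refl], rule sum.swap)
  also have "\<dots> = (\<Sum>m<n. ?c m m * of_nat n) / (of_nat n * of_nat n)"
    by (simp add: sum_root_unity_orthogonal[OF n] if_distrib[of "\<lambda>x. _ * x"] sum.delta
        flip: sum_distrib_left cong: if_cong del: power_int_of_nat)
  also have "\<dots> = dft_coeff n (\<lambda>w. f w * g w) (a + b)"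
    unfolding dft_coeff_def using n by (simp add: power_int_add mult_ac flip: sum_distrib_left)
  finally show ?thesis .
qed

section \<open>Circulant matrices\<close>

lemma index_mult_mat_sum:
  assumes "i < dim_row A" "j < dim_col B" "dim_col A = dim_row B"
  shows "(A * B) $$ (i, j) = (\<Sum>l<dim_row B. A $$ (i, l) * B $$ (l, j))"
  using assms by (simp add: scalar_prod_def atLeast0LessThan)

text \<open>
  With w_m the n-th roots of unity, circulant n f = F_n diag (f w_0, ..., f w_(n-1)) F_n^* and
  anticirculant n f = F_n diag (f w_0, ..., f w_(n-1)) F_n.
\<close>

definition circulant :: "nat \<Rightarrow> (complex \<Rightarrow> complex) \<Rightarrow> complex mat" where
  "circulant n f = mat n n (\<lambda>(i, j). dft_coeff n f (int i - int j))"

definition anticirculant :: "nat \<Rightarrow> (complex \<Rightarrow> complex) \<Rightarrow> complex mat" where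
  "anticirculant n f = mat n n (\<lambda>(i, j). dft_coeff n f (int i + int j))"

lemma circulant_carrier [simp]:
  "circulant n f \<in> carrier_mat n n" "dim_row (circulant n f) = n" "dim_col (circulant n f) = n"
  by (simp_all add: circulant_def)

lemma anticirculant_carrier [simp]:
  "anticirculant n f \<in> carrier_mat n n"
  "dim_row (anticirculant n f) = n" "dim_col (anticirculant n f) = n"
  by (simp_all add: anticirculant_def)

lemma index_circulant [simp]:
  "i < n \<Longrightarrow> j < n \<Longrightarrow> circulant n f $$ (i, j) = dft_coeff n f (int i - int j)"
  by (simp add: circulant_def)

lemma index_anticirculant [simp]:
  "i < n \<Longrightarrow> j < n \<Longrightarrow> anticirculant n f $$ (i, j) = dft_coeff n f (int i + int j)"
  by (simp add: anticirculant_def)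

lemma circulant_cong:
  "(\<And>m. m < n \<Longrightarrow> f (root_unity n m) = g (root_unity n m)) \<Longrightarrow> circulant n f = circulant n g"
  unfolding circulant_def by (metis dft_coeff_cong)

lemma circulant_mult_circulant:
  assumes "n > 0"
  shows "circulant n f * circulant n g = circulant n (\<lambda>w. f w * g w)"
proof (rule eq_matI)
  fix i j assume "i < dim_row (circulant n (\<lambda>w. f w * g w))"
      "j < dim_col (circulant n (\<lambda>w. f w * g w))"
  then show "(circulant n f * circulant n g) $$ (i, j) = circulant n (\<lambda>w. f w * g w) $$ (i, j)"
    using dft_coeff_convolution[OF assms, of f "int i" g "- int j"]
    by (simp add: index_mult_mat_sum del: index_mult_mat(1))
qed simp_all

lemma circulant_mult_anticirculant:
  assumes "n > 0"
  shows "circulant n f * anticirculant n g = anticirculant n (\<lambda>w. f w * g w)"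
proof (rule eq_matI)
  fix i j assume "i < dim_row (anticirculant n (\<lambda>w. f w * g w))"
      "j < dim_col (anticirculant n (\<lambda>w. f w * g w))"
  then show "(circulant n f * anticirculant n g) $$ (i, j)
      = anticirculant n (\<lambda>w. f w * g w) $$ (i, j)"
    using dft_coeff_convolution[OF assms, of f "int i" g "int j"]
    by (simp add: index_mult_mat_sum del: index_mult_mat(1))
qed simp_all

lemma anticirculant_mult_circulant:
  assumes "n > 0"
  shows "anticirculant n f * circulant n g = anticirculant n (\<lambda>w. f w * g (cnj w))"
proof (rule eq_matI)
  fix i j assume "i < dim_row (anticirculant n (\<lambda>w. f w * g (cnj w)))"
      "j < dim_col (anticirculant n (\<lambda>w. f w * g (cnj w)))"
  have "(\<Sum>l<n. dft_coeff n f (int i + int l) * dft_coeff n g (int l - int j))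
      = (\<Sum>l<n. dft_coeff n (\<lambda>w. f (cnj w)) (- int i - int l) * dft_coeff n g (int l + - int j))"
    by (intro sum.cong refl) (subst dft_coeff_reflect[OF assms], simp)
  also have "\<dots> = dft_coeff n (\<lambda>w. f w * g (cnj w)) (int i + int j)"
    by (subst dft_coeff_convolution[OF assms], subst dft_coeff_reflect[OF assms]) simp
  finally show "(anticirculant n f * circulant n g) $$ (i, j)
      = anticirculant n (\<lambda>w. f w * g (cnj w)) $$ (i, j)"
    using \<open>i < _\<close> \<open>j < _\<close> by (simp add: index_mult_mat_sum del: index_mult_mat(1))
qed simp_all

lemma anticirculant_mult_anticirculant:
  assumes "n > 0"
  shows "anticirculant n f * anticirculant n g = circulant n (\<lambda>w. f w * g (cnj w))"
proof (rule eq_matI)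
  fix i j assume "i < dim_row (circulant n (\<lambda>w. f w * g (cnj w)))"
      "j < dim_col (circulant n (\<lambda>w. f w * g (cnj w)))"
  have "(\<Sum>l<n. dft_coeff n f (int i + int l) * dft_coeff n g (int l + int j))
      = (\<Sum>l<n. dft_coeff n (\<lambda>w. f (cnj w)) (- int i - int l) * dft_coeff n g (int l + int j))"
    by (intro sum.cong refl) (subst dft_coeff_reflect[OF assms], simp)
  also have "\<dots> = dft_coeff n (\<lambda>w. f w * g (cnj w)) (int i - int j)"
    by (subst dft_coeff_convolution[OF assms], subst dft_coeff_reflect[OF assms]) simp
  finally show "(anticirculant n f * anticirculant n g) $$ (i, j)
      = circulant n (\<lambda>w. f w * g (cnj w)) $$ (i, j)"
    using \<open>i < _\<close> \<open>j < _\<close> by (simp add: index_mult_mat_sum del: index_mult_mat(1))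
qed simp_all

lemma circulant_one:
  assumes "n > 0"
  shows "circulant n (\<lambda>_. 1) = 1\<^sub>m n"
proof (rule eq_matI)
  fix i j assume "i < dim_row (1\<^sub>m n :: complex mat)" "j < dim_col (1\<^sub>m n :: complex mat)"
  then have "int n dvd (int i - int j) \<longleftrightarrow> i = j"
    by (auto simp flip: mod_eq_dvd_iff)
  with \<open>i < _\<close> \<open>j < _\<close> show "circulant n (\<lambda>_. 1) $$ (i, j) = 1\<^sub>m n $$ (i, j)"
    by (simp add: dft_coeff_one[OF assms])
qed simp_all

lemma trace_circulant: "tr (circulant n f) = of_nat n * dft_coeff n f 0"
  by (simp add: tr_def)

lemma adj_circulant: "adj (circulant n f) = circulant n (\<lambda>w. cnj (f w))"
  by (rule eq_matI) (auto simp: adj_def cnj_dft_coeff)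

lemma transpose_circulant:
  assumes "n > 0"
  shows "transpose_mat (circulant n f) = circulant n (\<lambda>w. f (cnj w))"
  by (rule eq_matI) (auto simp: dft_coeff_uminus[OF assms, symmetric])

lemma cmat_anticirculant:
  assumes "n > 0"
  shows "cmat (anticirculant n f) = anticirculant n (\<lambda>w. cnj (f (cnj w)))"
  by (rule eq_matI)
      (auto simp: cmat_def cnj_dft_coeff dft_coeff_uminus[OF assms, of "\<lambda>w. cnj (f w)", symmetric])

lemma dft_coeff_shifted_symb:
  "dft_coeff n (\<lambda>w. z - symb r s a w) d
     = z * dft_coeff n (\<lambda>_. 1) d - (\<Sum>k\<in>{-int r..int s}. a k * dft_coeff n (\<lambda>_. 1) (k + d))"
proof -
  let ?w = "root_unity n"
  have "(\<Sum>m<n. (z - symb r s a (?w m)) * ?w m powi d)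
      = z * (\<Sum>m<n. ?w m powi d) - (\<Sum>k\<in>{-int r..int s}. a k * (\<Sum>m<n. ?w m powi (k + d)))"
    by (simp add: left_diff_distrib sum_subtractf symb_def sum_distrib_left sum_distrib_right
        power_int_add mult.assoc sum.swap[of _ "{..<n}"])
  then show ?thesis
    unfolding dft_coeff_def by (simp add: diff_divide_distrib flip: sum_divide_distrib)
qed

lemma shifted_circ_eq_circulant:
  assumes n: "n > 0"
  shows "z \<cdot>\<^sub>m 1\<^sub>m n - circ r s a n = circulant n (\<lambda>w. z - symb r s a w)"
proof (rule eq_matI)
  fix i j assume "i < dim_row (circulant n (\<lambda>w. z - symb r s a w))"
      "j < dim_col (circulant n (\<lambda>w. z - symb r s a w))"
  then have ij: "i < n" "j < n" by simp_all
  have "dft_coeff n (\<lambda>_. 1) (k + (int i - int j))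
      = (if (int j - int i) mod int n = k mod int n then 1 else 0)" for k
  proof -
    have "int n dvd k + (int i - int j) \<longleftrightarrow> int n dvd int j - int i - k"
      by (metis dvd_minus_iff minus_diff_eq diff_diff_eq2 add.commute diff_add_eq)
    then show ?thesis by (simp add: dft_coeff_one[OF n] mod_eq_dvd_iff)
  qed
  moreover have "dft_coeff n (\<lambda>_. 1) (int i - int j) = (if i = j then 1 else 0)"
    using circulant_one[OF n] ij by (metis index_circulant index_one_mat(1))
  ultimately show "(z \<cdot>\<^sub>m 1\<^sub>m n - circ r s a n) $$ (i, j)
      = circulant n (\<lambda>w. z - symb r s a w) $$ (i, j)"
    using ij by (simp add: circ_def dft_coeff_shifted_symb if_distrib[of "(*) _"] cong: if_cong)
qed (simp_all add: circ_def)

lemma mat_inverse_eqI: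
  fixes A B :: "'a :: field mat"
  assumes "A \<in> carrier_mat n n" "B \<in> carrier_mat n n" "A * B = 1\<^sub>m n" "B * A = 1\<^sub>m n"
  shows "the (mat_inverse A) = B"
proof (cases "mat_inverse A")
  case None
  have "A \<in> Units (ring_mat TYPE('a) n undefined)"
    using assms unfolding Units_def by (auto simp: ring_mat_simps)
  with mat_inverse(1)[OF assms(1) None] show ?thesis by contradiction
next
  case (Some A')
  with mat_inverse(2)[OF assms(1)] have "A * A' = 1\<^sub>m n" "A' \<in> carrier_mat n n" by auto
  then have "B = B * (A * A')" using assms by simp
  also have "\<dots> = (B * A) * A'" using assms \<open>A' \<in> _\<close> by (metis assoc_mult_mat)
  also have "\<dots> = A'" using assms \<open>A' \<in> _\<close> by simp
  finally show ?thesis using Some by simp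
qed

definition res_symb :: "nat \<Rightarrow> nat \<Rightarrow> (int \<Rightarrow> complex) \<Rightarrow> complex \<Rightarrow> complex \<Rightarrow> complex" where
  "res_symb r s a z w = 1 / (z - symb r s a w)"

lemma resolv_eq_circulant:
  assumes n: "n > 0" and avoid: "\<And>m. m < n \<Longrightarrow> symb r s a (root_unity n m) \<noteq> z"
  shows "resolv r s a n z = circulant n (res_symb r s a z)"
  unfolding resolv_def shifted_circ_eq_circulant[OF n]
proof (rule mat_inverse_eqI)
  have "circulant n (\<lambda>w. (z - symb r s a w) * res_symb r s a z w) = circulant n (\<lambda>_. 1)"
    "circulant n (\<lambda>w. res_symb r s a z w * (z - symb r s a w)) = circulant n (\<lambda>_. 1)"
    using avoid by (auto simp: res_symb_def intro!: circulant_cong) (metis eq_iff_diff_eq_0)+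
  then show "circulant n (\<lambda>w. z - symb r s a w) * circulant n (res_symb r s a z) = 1\<^sub>m n"
    "circulant n (res_symb r s a z) * circulant n (\<lambda>w. z - symb r s a w) = 1\<^sub>m n"
    by (simp_all add: circulant_mult_circulant[OF n] circulant_one[OF n])
qed simp_all

section \<open>Compression to the corner coordinates\<close>

definition select_mat :: "nat \<Rightarrow> nat \<Rightarrow> (nat \<Rightarrow> int) \<Rightarrow> complex mat" where
  "select_mat k n \<tau> = mat k n (\<lambda>(u, l). if int l = \<tau> u mod int n then 1 else 0)"

lemma select_mat_carrier [simp]:
  "select_mat k n \<tau> \<in> carrier_mat k n"
  "dim_row (select_mat k n \<tau>) = k" "dim_col (select_mat k n \<tau>) = n"
  by (simp_all add: select_mat_def)

lemma index_select_mat: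
  "u < k \<Longrightarrow> l < n \<Longrightarrow> select_mat k n \<tau> $$ (u, l) = (if int l = \<tau> u mod int n then 1 else 0)"
  by (simp add: select_mat_def)

lemma select_mat_mult_entry:
  assumes "n > 0" "u < k" "j < dim_col A" "dim_row A = n"
  shows "(select_mat k n \<tau> * A) $$ (u, j) = A $$ (nat (\<tau> u mod int n), j)"
proof -
  have "nat (\<tau> u mod int n) < n" using assms(1) by (simp add: nat_less_iff)
  moreover have "int l = \<tau> u mod int n \<longleftrightarrow> l = nat (\<tau> u mod int n)" for l
    using assms(1) by auto
  ultimately show ?thesis
    using assms by (simp add: index_mult_mat_sum index_select_mat if_distrib[of "\<lambda>x. x * _"] sum.delta'
        del: index_mult_mat(1) cong: if_cong)
qed

lemma mult_transpose_select_mat_entry: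
  assumes "n > 0" "v < k" "i < dim_row A" "dim_col A = n"
  shows "(A * transpose_mat (select_mat k n \<tau>)) $$ (i, v) = A $$ (i, nat (\<tau> v mod int n))"
proof -
  have "nat (\<tau> v mod int n) < n" using assms(1) by (simp add: nat_less_iff)
  moreover have "int l = \<tau> v mod int n \<longleftrightarrow> l = nat (\<tau> v mod int n)" for l
    using assms(1) by auto
  ultimately show ?thesis
    using assms by (simp add: index_mult_mat_sum index_select_mat if_distrib[of "\<lambda>x. _ * x"] sum.delta'
        del: index_mult_mat(1) cong: if_cong)
qed

lemma select_mat_compression_entry:
  assumes "n > 0" "M \<in> carrier_mat n n" "u < k" "v < k"
  shows "(select_mat k n \<tau> * M * transpose_mat (select_mat k n \<tau>)) $$ (u, v)
       = M $$ (nat (\<tau> u mod int n), nat (\<tau> v mod int n))"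
proof -
  have "(select_mat k n \<tau> * M * transpose_mat (select_mat k n \<tau>)) $$ (u, v)
      = (select_mat k n \<tau> * M) $$ (u, nat (\<tau> v mod int n))"
    by (rule mult_transpose_select_mat_entry) (use assms in auto)
  also have "\<dots> = M $$ (nat (\<tau> u mod int n), nat (\<tau> v mod int n))"
    by (rule select_mat_mult_entry) (use assms in \<open>auto simp: nat_less_iff\<close>)
  finally show ?thesis .
qed

lemma select_mat_circulant:
  assumes "n > 0"
  shows "select_mat k n \<tau> * circulant n f * transpose_mat (select_mat k n \<tau>)
       = mat k k (\<lambda>(u, v). dft_coeff n f (\<tau> u - \<tau> v))"
proof (rule eq_matI)
  fix u v assume "u < dim_row (mat k k (\<lambda>(u, v). dft_coeff n f (\<tau> u - \<tau> v)))"
    "v < dim_col (mat k k (\<lambda>(u, v). dft_coeff n f (\<tau> u - \<tau> v)))"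
  moreover have "dft_coeff n f (\<tau> u mod int n - \<tau> v mod int n) = dft_coeff n f (\<tau> u - \<tau> v)"
    using assms by (intro dft_coeff_mod) (simp_all add: mod_diff_eq)
  ultimately show "(select_mat k n \<tau> * circulant n f * transpose_mat (select_mat k n \<tau>)) $$ (u, v)
      = mat k k (\<lambda>(u, v). dft_coeff n f (\<tau> u - \<tau> v)) $$ (u, v)"
    using assms by (simp add: select_mat_compression_entry nat_less_iff del: index_mult_mat(1))
qed simp_all

lemma select_mat_anticirculant:
  assumes "n > 0"
  shows "select_mat k n \<tau> * anticirculant n f * transpose_mat (select_mat k n \<tau>)
       = mat k k (\<lambda>(u, v). dft_coeff n f (\<tau> u + \<tau> v))"
proof (rule eq_matI)
  fix u v assume "u < dim_row (mat k k (\<lambda>(u, v). dft_coeff n f (\<tau> u + \<tau> v)))"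
    "v < dim_col (mat k k (\<lambda>(u, v). dft_coeff n f (\<tau> u + \<tau> v)))"
  moreover have "dft_coeff n f (\<tau> u mod int n + \<tau> v mod int n) = dft_coeff n f (\<tau> u + \<tau> v)"
    using assms by (intro dft_coeff_mod) (simp_all add: mod_add_eq)
  ultimately show "(select_mat k n \<tau> * anticirculant n f * transpose_mat (select_mat k n \<tau>)) $$ (u, v)
      = mat k k (\<lambda>(u, v). dft_coeff n f (\<tau> u + \<tau> v)) $$ (u, v)"
    using assms by (simp add: select_mat_compression_entry nat_less_iff del: index_mult_mat(1))
qed simp_all

lemma mult_select_mat_entry:
  assumes "i < dim_row A" "dim_col A = k" "j < n"
  shows "(A * select_mat k n \<tau>) $$ (i, j) = (\<Sum>u | u < k \<and> int j = \<tau> u mod int n. A $$ (i, u))"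
proof -
  have "(A * select_mat k n \<tau>) $$ (i, j) = (\<Sum>u<k. if int j = \<tau> u mod int n then A $$ (i, u) else 0)"
    using assms by (simp add: index_mult_mat_sum index_select_mat if_distrib[of "\<lambda>x. _ * x"]
        del: index_mult_mat(1) cong: if_cong)
  also have "\<dots> = (\<Sum>u \<in> {u \<in> {..<k}. int j = \<tau> u mod int n}. A $$ (i, u))"
    by (rule sum.inter_filter[symmetric]) simp
  finally show ?thesis by simp
qed

lemma transpose_select_mat_mult_entry:
  assumes "i < n" "dim_row B = k" "j < dim_col B"
  shows "(transpose_mat (select_mat k n \<tau>) * B) $$ (i, j)
      = (\<Sum>u | u < k \<and> int i = \<tau> u mod int n. B $$ (u, j))"
proof -
  have "(transpose_mat (select_mat k n \<tau>) * B) $$ (i, j)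
      = (\<Sum>u<k. if int i = \<tau> u mod int n then B $$ (u, j) else 0)"
    using assms by (simp add: index_mult_mat_sum index_select_mat if_distrib[of "\<lambda>x. x * _"]
        del: index_mult_mat(1) cong: if_cong)
  also have "\<dots> = (\<Sum>u \<in> {u \<in> {..<k}. int i = \<tau> u mod int n}. B $$ (u, j))"
    by (rule sum.inter_filter[symmetric]) simp
  finally show ?thesis by simp
qed

lemma mod_eq_add_modulus_if_neg:
  fixes x n :: int
  assumes "- n \<le> x" "x < 0"
  shows "x mod n = x + n"
  using assms by (smt (verit) mod_add_self2 mod_pos_pos_trivial)

text \<open>
  Q_n only involves the first s and the last r coordinates of C^n. Numbering the latter
  -r, ..., -1 (they are only used modulo n) makes their positions independent of n.
\<close>

definition Q_index :: "nat \<Rightarrow> nat \<Rightarrow> nat \<Rightarrow> int" where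
  "Q_index r s u = (if u < s then int u else int u - int (r + s))"

lemma Q_index_mod:
  assumes "r + s < n" "u < r + s"
  shows "Q_index r s u mod int n = (if u < s then int u else int n + int u - int (r + s))"
  using assms by (simp add: Q_index_def mod_eq_add_modulus_if_neg)

lemma Qn_eq_calD_select:
  assumes n: "r + s < n"
  shows "Qn r s a n = calD r s a * select_mat (r + s) n (Q_index r s)"
proof (rule eq_matI)
  fix i j assume "i < dim_row (calD r s a * select_mat (r + s) n (Q_index r s))"
    "j < dim_col (calD r s a * select_mat (r + s) n (Q_index r s))"
  then have ij: "i < r + s" "j < n" by (simp_all add: calD_def)
  have "{u. u < r + s \<and> int j = Q_index r s u mod int n}
      = (if j < s then {j} else if n - r \<le> j then {j + s + r - n} else {})"
    using n ij by (auto simp: Q_index_mod split: if_splits)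
  then show "Qn r s a n $$ (i, j) = (calD r s a * select_mat (r + s) n (Q_index r s)) $$ (i, j)"
    using n ij by (simp add: mult_select_mat_entry calD_def Qn_def del: index_mult_mat(1)) linarith
qed (simp_all add: Qn_def calD_def)

lemma Pn_eq_select_calE:
  assumes n: "r + s < n"
  shows "Pn r s a n = transpose_mat (select_mat (r + s) n (\<lambda>u. int u - int s)) * calE r s a"
proof (rule eq_matI)
  fix i j assume "i < dim_row (transpose_mat (select_mat (r + s) n (\<lambda>u. int u - int s)) * calE r s a)"
    "j < dim_col (transpose_mat (select_mat (r + s) n (\<lambda>u. int u - int s)) * calE r s a)"
  then have ij: "i < n" "j < r + s" by (simp_all add: calE_def)
  have "(int u - int s) mod int n
      = (if u < s then int n + int u - int s else int u - int s)"
      if "u < r + s" for u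
    using n that by (simp add: mod_eq_add_modulus_if_neg)
  then have "{u. u < r + s \<and> int i = (int u - int s) mod int n}
      = (if i < r then {i + s} else if n - s \<le> i then {i + s - n} else {})"
    using n ij by (auto split: if_splits)
  then show "Pn r s a n $$ (i, j)
      = (transpose_mat (select_mat (r + s) n (\<lambda>u. int u - int s)) * calE r s a) $$ (i, j)"
    using n ij by (simp add: transpose_select_mat_mult_entry calE_def Pn_def del: index_mult_mat(1))
      linarith
qed (simp_all add: Pn_def calE_def)

lemma cmat_carrier [simp]:
  "cmat A \<in> carrier_mat n m \<longleftrightarrow> A \<in> carrier_mat n m"
  "dim_row (cmat A) = dim_row A" "dim_col (cmat A) = dim_col A"
  by (simp_all add: cmat_def)

lemma adj_carrier [simp]:
  "adj A \<in> carrier_mat m n \<longleftrightarrow> A \<in> carrier_mat n m"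
  "dim_row (adj A) = dim_col A" "dim_col (adj A) = dim_row A"
  by (simp_all add: adj_def)

lemma adj_eq_transpose_cmat: "adj A = transpose_mat (cmat A)"
  by (simp add: adj_def cmat_def)

lemma cmat_transpose: "cmat (transpose_mat A) = transpose_mat (cmat A)"
  by (rule eq_matI) (auto simp: cmat_def)

lemma cmat_mult:
  assumes "A \<in> carrier_mat n m" "B \<in> carrier_mat m p"
  shows "cmat (A * B) = cmat A * cmat B"
proof (rule eq_matI)
  fix i j assume "i < dim_row (cmat A * cmat B)" "j < dim_col (cmat A * cmat B)"
  moreover have "dim_row A = n" "dim_col A = m" "dim_row B = m" "dim_col B = p"
    using assms by auto
  ultimately show "cmat (A * B) $$ (i, j) = (cmat A * cmat B) $$ (i, j)"
    by (simp add: cmat_def index_mult_mat_sum del: index_mult_mat(1))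
qed (use assms in \<open>simp_all add: cmat_def\<close>)

lemma adj_mult:
  assumes "A \<in> carrier_mat n m" "B \<in> carrier_mat m p"
  shows "adj (A * B) = adj B * adj A"
proof -
  have "cmat A \<in> carrier_mat n m" "cmat B \<in> carrier_mat m p"
    using assms by (simp_all add: cmat_def)
  with assms show ?thesis by (simp add: adj_eq_transpose_cmat cmat_mult transpose_mult)
qed

lemma cmat_select_mat [simp]: "cmat (select_mat k n \<tau>) = select_mat k n \<tau>"
  by (rule eq_matI) (auto simp: cmat_def index_select_mat)

lemma adj_transpose [simp]: "adj (transpose_mat A) = cmat A"
  by (simp add: adj_eq_transpose_cmat cmat_transpose)

lemma adj_select_mat [simp]: "adj (select_mat k n \<tau>) = transpose_mat (select_mat k n \<tau>)"
  by (simp add: adj_eq_transpose_cmat)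

lemma fourier_carrier [simp]:
  "fourier n \<in> carrier_mat n n" "dim_row (fourier n) = n" "dim_col (fourier n) = n"
  by (simp_all add: fourier_def)

lemma transpose_fourier: "transpose_mat (fourier n) = fourier n"
  by (rule eq_matI) (auto simp: fourier_def mult.commute mult.left_commute)

lemma fourier_mult_fourier:
  assumes n: "n > 0"
  shows "fourier n * fourier n = anticirculant n (\<lambda>_. 1)"
proof (rule eq_matI)
  fix i j assume "i < dim_row (anticirculant n (\<lambda>_. 1))" "j < dim_col (anticirculant n (\<lambda>_. 1))"
  then have ij: "i < n" "j < n" by simp_all
  have "fourier n $$ (i, l) * fourier n $$ (l, j)
      = root_unity n l powi (int i + int j) / of_nat n"
      if "l < n" for l
  proof -
    have "complex_of_real (sqrt (real n)) * complex_of_real (sqrt (real n)) = of_nat n"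
      by (simp flip: of_real_mult)
    moreover have "exp (2 * \<i> * pi * i * l / n) * exp (2 * \<i> * pi * l * j / n)
        = root_unity n l powi (int i + int j)"
      unfolding root_unity_powi cis_conv_exp
      by (simp flip: exp_add) (simp add: field_simps add_divide_distrib)
    ultimately show ?thesis
      using ij that by (simp add: fourier_def)
  qed
  then show "(fourier n * fourier n) $$ (i, j) = anticirculant n (\<lambda>_. 1) $$ (i, j)"
    using ij by (simp add: index_mult_mat_sum dft_coeff_def sum_divide_distrib del: index_mult_mat(1))
qed simp_all

lemma fourier_twist:
  assumes "n > 0"
  shows "fourier n * transpose_mat (fourier n) = anticirculant n (\<lambda>_. 1)"
    and "cmat (fourier n) * adj (fourier n) = anticirculant n (\<lambda>_. 1)"
proof -
  show "fourier n * transpose_mat (fourier n) = anticirculant n (\<lambda>_. 1)"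
    by (simp add: transpose_fourier fourier_mult_fourier[OF assms])
  have "cmat (fourier n) * adj (fourier n) = cmat (fourier n * fourier n)"
    by (simp add: adj_eq_transpose_cmat transpose_fourier cmat_mult[of _ n n _ n] flip: cmat_transpose)
  then show "cmat (fourier n) * adj (fourier n) = anticirculant n (\<lambda>_. 1)"
    by (simp add: fourier_mult_fourier[OF assms] cmat_anticirculant[OF assms])
qed

lemma real_orthogonal_twist:
  assumes "real_orthogonal_cmat n U"
  shows "U * transpose_mat U = 1\<^sub>m n" and "cmat U * adj U = 1\<^sub>m n"
proof -
  show UU: "U * transpose_mat U = 1\<^sub>m n"
    using assms by (simp add: real_orthogonal_cmat_def)
  have "cmat U = U"
    using assms by (intro eq_matI) (auto simp: real_orthogonal_cmat_def cmat_def Reals_cnj_iff)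
  then show "cmat U * adj U = 1\<^sub>m n"
    by (simp add: adj_eq_transpose_cmat UU)
qed

lemma calD_carrier [simp]: "calD r s a \<in> carrier_mat (r + s) (r + s)"
  by (simp add: calD_def)

lemma calE_carrier [simp]: "calE r s a \<in> carrier_mat (r + s) (r + s)"
  by (simp add: calE_def)

lemma trace_mult_comm:
  assumes "A \<in> carrier_mat n m" "B \<in> carrier_mat m n"
  shows "tr (A * B) = tr (B * A)"
proof -
  have "tr (A * B) = (\<Sum>i<n. \<Sum>l<m. A $$ (i, l) * B $$ (l, i))"
    using assms by (simp add: tr_def index_mult_mat_sum del: index_mult_mat(1))
  also have "\<dots> = (\<Sum>l<m. \<Sum>i<n. B $$ (l, i) * A $$ (i, l))"
    by (subst sum.swap) (simp add: mult.commute)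
  also have "\<dots> = tr (B * A)"
    using assms by (simp add: tr_def index_mult_mat_sum del: index_mult_mat(1))
  finally show ?thesis .
qed

lemma trace_rotate:
  assumes "A \<in> carrier_mat n n" "B \<in> carrier_mat n n" "C \<in> carrier_mat n n" "D \<in> carrier_mat n n"
    "E \<in> carrier_mat n n" "F \<in> carrier_mat n n"
  shows "tr (A * B * C * D * E * F) = tr (B * (C * D) * E * (F * A))"
proof -
  have "tr (A * B * C * D * E * F) = tr (A * (B * C * D * E * F))"
    using assms by (simp add: mult_carrier_mat[of _ n n _ n] assoc_mult_mat[of _ n n _ n _ n])
  also have "\<dots> = tr ((B * C * D * E * F) * A)"
    using assms by (intro trace_mult_comm) auto
  also have "\<dots> = tr (B * (C * D) * E * (F * A))"
    using assms by (simp add: mult_carrier_mat[of _ n n _ n] assoc_mult_mat[of _ n n _ n _ n])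
  finally show ?thesis .
qed

lemma compression_assoc:
  assumes "D \<in> carrier_mat k k" "S \<in> carrier_mat k n" "K \<in> carrier_mat n n" "E \<in> carrier_mat k k"
  shows "D * S * K * (transpose_mat S * E) = D * (S * K * transpose_mat S) * E"
  using assms by (simp add: mult_carrier_mat[of _ k k _ n] mult_carrier_mat[of _ k n _ n]
      mult_carrier_mat[of _ k n _ k] assoc_mult_mat[of _ k k _ n _ n] assoc_mult_mat[of _ k n _ n _ k]
      assoc_mult_mat[of _ k k _ n _ k] assoc_mult_mat[of _ k n _ k _ k] assoc_mult_mat[of _ n n _ k _ k]
      assoc_mult_mat[of _ k k _ k _ k])

section \<open>Riemann sums on the unit circle\<close>

lemma riemann_sum_error:
  fixes \<phi> :: "real \<Rightarrow> 'a::banach" and c :: real and n :: nat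
  assumes cont: "continuous_on {0..c} \<phi>" and "0 \<le> c" "n > 0"
    and osc: "\<And>s t. s \<in> {0..c} \<Longrightarrow> t \<in> {0..c} \<Longrightarrow> \<bar>s - t\<bar> \<le> c / n \<Longrightarrow> norm (\<phi> s - \<phi> t) \<le> \<epsilon>"
  shows "norm ((c / n) *\<^sub>R (\<Sum>m<n. \<phi> (c * m / n)) - integral {0..c} \<phi>) \<le> \<epsilon> * c"
proof -
  define t where "t m = c * m / n" for m :: nat
  have t_mono: "t m \<le> t m'" if "m \<le> m'" for m m'
    unfolding t_def using that \<open>0 \<le> c\<close> by (intro divide_right_mono mult_left_mono) auto
  have t_step: "t (Suc m) - t m = c / n" for m
    unfolding t_def by (simp add: field_simps add_divide_distrib)
  have t_range: "t m \<in> {0..c}" if "m \<le> n" for m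
    using t_mono[OF that] t_mono[of 0 m] \<open>n > 0\<close> by (simp add: t_def)
  have "norm ((c / n) *\<^sub>R (\<Sum>m<k. \<phi> (t m)) - integral {0..t k} \<phi>) \<le> \<epsilon> * t k" if "k \<le> n" for k
    using that
  proof (induction k)
    case 0
    then show ?case by (simp add: t_def)
  next
    case (Suc k)
    let ?J = "integral {t k..t (Suc k)} \<phi>"
    have cell: "{t k..t (Suc k)} \<subseteq> {0..c}"
      using t_range[of k] t_range[OF Suc.prems] Suc.prems by auto
    have cont_cell: "continuous_on {t k..t (Suc k)} \<phi>"
      using continuous_on_subset[OF cont cell] .
    have "integral {0..t k} \<phi> + ?J = integral {0..t (Suc k)} \<phi>"
      using t_range[of k] Suc.prems t_mono[of k "Suc k"] t_range[OF Suc.prems]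
      by (intro Henstock_Kurzweil_Integration.integral_combine integrable_continuous_interval
          continuous_on_subset[OF cont]) auto
    then have split: "(c / n) *\<^sub>R (\<Sum>m<Suc k. \<phi> (t m)) - integral {0..t (Suc k)} \<phi>
        = ((c / n) *\<^sub>R (\<Sum>m<k. \<phi> (t m)) - integral {0..t k} \<phi>) + ((c / n) *\<^sub>R \<phi> (t k) - ?J)"
      by (simp add: scaleR_add_right algebra_simps)
    have "(c / n) *\<^sub>R \<phi> (t k) - ?J = integral {t k..t (Suc k)} (\<lambda>s. \<phi> (t k) - \<phi> s)"
      using t_step[of k] t_mono[of k "Suc k"] cont_cell
      by (simp add: integral_diff integrable_continuous_interval)
    also have "norm \<dots> \<le> \<epsilon> * (t (Suc k) - t k)"
    proof (rule integral_bound[OF t_mono])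
      show "continuous_on {t k..t (Suc k)} (\<lambda>s. \<phi> (t k) - \<phi> s)"
        using cont_cell by (intro continuous_intros)
      show "norm (\<phi> (t k) - \<phi> s) \<le> \<epsilon>" if "s \<in> {t k..t (Suc k)}" for s
        using that cell t_step[of k] by (intro osc) auto
    qed simp
    finally have "norm ((c / n) *\<^sub>R \<phi> (t k) - ?J) \<le> \<epsilon> * (c / n)"
      using t_step[of k] by simp
    moreover have "norm ((c / n) *\<^sub>R (\<Sum>m<k. \<phi> (t m)) - integral {0..t k} \<phi>) \<le> \<epsilon> * t k"
      using Suc by simp
    ultimately have "norm (((c / n) *\<^sub>R (\<Sum>m<k. \<phi> (t m)) - integral {0..t k} \<phi>)
        + ((c / n) *\<^sub>R \<phi> (t k) - ?J))
        \<le> \<epsilon> * t k + \<epsilon> * (c / n)"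
      by (smt (verit) norm_triangle_ineq)
    then show ?case
      unfolding split using t_step[of k] by (simp add: algebra_simps)
  qed
  from this[of n] \<open>n > 0\<close> show ?thesis by (simp add: t_def)
qed

lemma uniform_limit_riemann_circle:
  fixes h :: "'a::metric_space \<Rightarrow> complex \<Rightarrow> complex"
  assumes "compact K" and cont: "continuous_on (K \<times> sphere 0 1) (\<lambda>p. h (fst p) (snd p))"
  shows "uniform_limit K (\<lambda>n x. (\<Sum>m<n. h x (root_unity n m)) / of_nat n)
           (\<lambda>x. integral {0..2 * pi} (\<lambda>t. h x (cis t)) / (2 * pi)) sequentially"
  unfolding uniform_limit_sequentially_iff
proof (intro allI impI)
  fix e :: real assume "e > 0"
  define \<psi> where "\<psi> p = h (fst p) (cis (snd p))" for p :: "'a \<times> real"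
  have "continuous_on (K \<times> {0..2 * pi}) \<psi>"
    unfolding \<psi>_def
    by (rule continuous_on_compose2[OF cont, where f = "\<lambda>p. (fst p, cis (snd p))", simplified])
      (auto intro!: continuous_intros)
  then have "uniformly_continuous_on (K \<times> {0..2 * pi}) \<psi>"
    using \<open>compact K\<close> by (intro compact_uniformly_continuous compact_Times) auto
  then obtain \<delta> where "\<delta> > 0"
    and \<delta>: "\<And>p p'. p \<in> K \<times> {0..2 * pi} \<Longrightarrow> p' \<in> K \<times> {0..2 * pi}
        \<Longrightarrow> dist p' p < \<delta> \<Longrightarrow> dist (\<psi> p') (\<psi> p) < e / 2"
    unfolding uniformly_continuous_on_def using \<open>e > 0\<close> by (metis half_gt_zero)
  obtain N :: nat where N: "2 * pi / \<delta> < N" using reals_Archimedean2 by blast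
  show "\<exists>N. \<forall>n\<ge>N. \<forall>x\<in>K. dist ((\<Sum>m<n. h x (root_unity n m)) / of_nat n)
      (integral {0..2 * pi} (\<lambda>t. h x (cis t)) / (2 * pi)) < e"
  proof (intro exI allI impI ballI)
    fix n x assume "N \<le> n" "x \<in> K"
    have "0 < real N" using N \<open>\<delta> > 0\<close> by (smt (verit) divide_pos_pos pi_gt_zero)
    then have "n > 0" "2 * pi / n < \<delta>"
      using N \<open>N \<le> n\<close> \<open>\<delta> > 0\<close> by (auto simp: field_simps) (smt (verit) mult_left_mono of_nat_le_iff)
    have "norm ((2 * pi / n) *\<^sub>R (\<Sum>m<n. h x (cis (2 * pi * m / n)))
        - integral {0..2 * pi} (\<lambda>t. h x (cis t)))
        \<le> e / 2 * (2 * pi)"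
    proof (rule riemann_sum_error[where \<phi> = "\<lambda>t. h x (cis t)" and c = "2 * pi"])
      show "continuous_on {0..2 * pi} (\<lambda>t. h x (cis t))"
        using \<open>x \<in> K\<close> by (intro continuous_on_compose2[OF cont, where f = "\<lambda>t. (x, cis t)", simplified])
          (auto intro!: continuous_intros)
      fix s t assume "s \<in> {0..2 * pi}" "t \<in> {0..2 * pi}" "\<bar>s - t\<bar> \<le> 2 * pi / n"
      then show "norm (h x (cis s) - h x (cis t)) \<le> e / 2"
        using \<delta>[of "(x, t)" "(x, s)"] \<open>x \<in> K\<close> \<open>2 * pi / n < \<delta>\<close>
        by (simp add: \<psi>_def dist_Pair_Pair dist_norm)
    qed (use \<open>n > 0\<close> in auto)
    moreover have "(\<Sum>m<n. h x (root_unity n m)) / of_nat n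
        - integral {0..2 * pi} (\<lambda>t. h x (cis t)) / (2 * pi)
        = ((2 * pi / n) *\<^sub>R (\<Sum>m<n. h x (cis (2 * pi * m / n)))
            - integral {0..2 * pi} (\<lambda>t. h x (cis t))) / (2 * pi)"
      using \<open>n > 0\<close> by (simp add: root_unity_def scaleR_conv_of_real field_simps)
    ultimately have "norm ((\<Sum>m<n. h x (root_unity n m)) / of_nat n
        - integral {0..2 * pi} (\<lambda>t. h x (cis t)) / (2 * pi))
        \<le> e / 2"
      by (simp add: norm_divide divide_le_eq)
    then show "dist ((\<Sum>m<n. h x (root_unity n m)) / of_nat n)
        (integral {0..2 * pi} (\<lambda>t. h x (cis t)) / (2 * pi)) < e"
      using \<open>e > 0\<close> by (simp add: dist_norm)
  qed
qed

lemma uniform_limit_dft_coeff: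
  fixes f :: "'a::metric_space \<Rightarrow> complex \<Rightarrow> complex"
  assumes "compact K" and cont: "continuous_on (K \<times> sphere 0 1) (\<lambda>p. f (fst p) (snd p))"
  shows "uniform_limit K (\<lambda>n x. dft_coeff n (f x) d)
      (\<lambda>x. oint (\<lambda>w. f x w * w powi d / w)) sequentially"
proof -
  have "continuous_on (K \<times> sphere 0 1) (\<lambda>p. f (fst p) (snd p) * snd p powi d)"
    by (intro continuous_intros cont) auto
  from uniform_limit_riemann_circle[OF assms(1) this] show ?thesis
    by (simp add: dft_coeff_def oint_def)
qed

lemma uniform_limit_sum:
  fixes f :: "'i \<Rightarrow> 'n \<Rightarrow> 'a \<Rightarrow> 'b::real_normed_vector"
  assumes "finite I" "\<And>i. i \<in> I \<Longrightarrow> uniform_limit X (f i) (l i) F"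
  shows "uniform_limit X (\<lambda>n x. \<Sum>i\<in>I. f i n x) (\<lambda>x. \<Sum>i\<in>I. l i x) F"
  using assms by (induction I rule: finite_induct) (auto intro: uniform_limit_add uniform_limit_const)

lemma unif_conv_iff_uniform_limit:
  "unif_conv \<Gamma> F L \<longleftrightarrow> uniform_limit (\<Gamma> \<times> \<Gamma>)
      (\<lambda>n p. F n (fst p) (snd p))
      (\<lambda>p. L (fst p) (snd p)) sequentially"
  unfolding unif_conv_def uniform_limit_sequentially_iff by (simp add: dist_norm)

lemma unif_conv_dft_coeff:
  assumes "compact \<Gamma>" and cont: "continuous_on ((\<Gamma> \<times> \<Gamma>) \<times> sphere 0 1) (\<lambda>q. g (fst q) (snd q))"
    and fin: "\<And>n z z'. N \<le> n \<Longrightarrow> z \<in> \<Gamma> \<Longrightarrow> z' \<in> \<Gamma> \<Longrightarrow> F n z z' = dft_coeff n (g (z, z')) d"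
    and lim: "\<And>z z'. z \<in> \<Gamma> \<Longrightarrow> z' \<in> \<Gamma> \<Longrightarrow> L z z' = oint (\<lambda>w. g (z, z') w * w powi d / w)"
  shows "unif_conv \<Gamma> F L"
  unfolding unif_conv_iff_uniform_limit
proof (rule uniform_limit_cong[THEN iffD1])
  show "uniform_limit (\<Gamma> \<times> \<Gamma>) (\<lambda>n p. dft_coeff n (g p) d)
      (\<lambda>p. oint (\<lambda>w. g p w * w powi d / w)) sequentially"
    using \<open>compact \<Gamma>\<close> by (intro uniform_limit_dft_coeff compact_Times cont)
  show "\<forall>\<^sub>F n in sequentially. \<forall>p\<in>\<Gamma> \<times> \<Gamma>. dft_coeff n (g p) d = F n (fst p) (snd p)"
    unfolding eventually_sequentially by (intro exI[of _ N]) (auto simp: fin)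
qed (use lim in auto)

lemma index_mult_mat_sandwich:
  assumes "M1 \<in> carrier_mat k k" "M2 \<in> carrier_mat k k" "p < k" "q < k"
  shows "(M1 * mat k k X * M2) $$ (p, q) = (\<Sum>v<k. \<Sum>u<k. M1 $$ (p, u) * X (u, v) * M2 $$ (v, q))"
proof -
  have "(M1 * mat k k X * M2) $$ (p, q) = (\<Sum>v<k. (\<Sum>u<k. M1 $$ (p, u) * X (u, v)) * M2 $$ (v, q))"
    using assms by (simp add: index_mult_mat_sum del: index_mult_mat(1))
  then show ?thesis
    by (simp add: sum_distrib_right)
qed

lemma unif_conv_mat_dft_coeff:
  fixes d :: "nat \<Rightarrow> nat \<Rightarrow> int"
  assumes "compact \<Gamma>" and cont: "continuous_on ((\<Gamma> \<times> \<Gamma>) \<times> sphere 0 1) (\<lambda>q. g (fst q) (snd q))"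
    and M: "M1 \<in> carrier_mat k k" "M2 \<in> carrier_mat k k"
    and fin: "\<And>n z z'. N \<le> n \<Longrightarrow> z \<in> \<Gamma> \<Longrightarrow> z' \<in> \<Gamma> \<Longrightarrow>
      F n z z' = M1 * mat k k (\<lambda>(u, v). dft_coeff n (g (z, z')) (d u v)) * M2"
    and lim: "\<And>z z'. z \<in> \<Gamma> \<Longrightarrow> z' \<in> \<Gamma> \<Longrightarrow>
      L z z' = M1 * mat k k (\<lambda>(u, v). oint (\<lambda>w. g (z, z') w * w powi d u v / w)) * M2"
  shows "unif_conv_mat k \<Gamma> F L"
  unfolding unif_conv_mat_def unif_conv_iff_uniform_limit
proof (intro allI impI)
  fix p q assume "p < k" "q < k"
  have "uniform_limit (\<Gamma> \<times> \<Gamma>)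
      (\<lambda>n x. \<Sum>v<k. \<Sum>u<k. M1 $$ (p, u) * dft_coeff n (g x) (d u v) * M2 $$ (v, q))
      (\<lambda>x. \<Sum>v<k. \<Sum>u<k. M1 $$ (p, u) * oint (\<lambda>w. g x w * w powi d u v / w) * M2 $$ (v, q)) sequentially"
    using \<open>compact \<Gamma>\<close>
    by (intro uniform_limit_sum uniform_limit_intros uniform_limit_dft_coeff compact_Times cont) auto
  then show "uniform_limit (\<Gamma> \<times> \<Gamma>) (\<lambda>n x. F n (fst x) (snd x) $$ (p, q))
      (\<lambda>x. L (fst x) (snd x) $$ (p, q)) sequentially"
  proof (rule uniform_limit_cong[THEN iffD1, rotated 2])
    show "\<forall>\<^sub>F n in sequentially. \<forall>x\<in>\<Gamma> \<times> \<Gamma>.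
        (\<Sum>v<k. \<Sum>u<k. M1 $$ (p, u) * dft_coeff n (g x) (d u v) * M2 $$ (v, q))
            = F n (fst x) (snd x) $$ (p, q)"
      unfolding eventually_sequentially
      by (intro exI[of _ N]) (auto simp: fin index_mult_mat_sandwich[OF M \<open>p < k\<close> \<open>q < k\<close>])
  qed (use lim index_mult_mat_sandwich[OF M \<open>p < k\<close> \<open>q < k\<close>] in auto)
qed

section \<open>The finite-n quantities\<close>

context
  fixes r s :: nat and a :: "int \<Rightarrow> complex" and \<Gamma> :: "complex set"
  assumes avoid: "\<Gamma> \<inter> symb r s a ` sphere 0 1 = {}"
begin

lemma resolv_eq_circulant_on:
  assumes "n > 0" "z \<in> \<Gamma>"
  shows "resolv r s a n z = circulant n (res_symb r s a z)"
proof (rule resolv_eq_circulant[OF assms(1)])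
  fix m
  have "root_unity n m \<in> sphere 0 1" by simp
  then show "symb r s a (root_unity n m) \<noteq> z" using avoid assms(2) by blast
qed

lemma theta_n_eq_dft:
  assumes "n > 0" "z \<in> \<Gamma>" "z' \<in> \<Gamma>"
  shows "theta_n r s a n z z' = dft_coeff n (\<lambda>w. res_symb r s a z w * cnj (res_symb r s a z' w)) 0"
  using assms by (simp add: theta_n_def resolv_eq_circulant_on adj_circulant
      circulant_mult_circulant trace_circulant)

lemma A_n_eq_dft:
  assumes n: "r + s < n" and "z \<in> \<Gamma>" "z' \<in> \<Gamma>"
  shows "A_n r s a n z z' = calD r s a
    * mat (r + s) (r + s) (\<lambda>(u, v). dft_coeff n (\<lambda>w. res_symb r s a z w * cnj (res_symb r s a z' w))
        (Q_index r s u - Q_index r s v))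
    * adj (calD r s a)"
proof -
  let ?S = "select_mat (r + s) n (Q_index r s)"
  have n0: "n > 0" using n by simp
  have D: "calD r s a \<in> carrier_mat (r + s) (r + s)" by simp
  have "A_n r s a n z z' = calD r s a * ?S
      * (circulant n (res_symb r s a z) * circulant n (\<lambda>w. cnj (res_symb r s a z' w)))
      * (transpose_mat ?S * adj (calD r s a))"
    using assms D by (simp add: A_n_def Qn_eq_calD_select resolv_eq_circulant_on adj_circulant
        adj_mult[OF D select_mat_carrier(1)] mult_carrier_mat[of _ "r + s" "r + s" _ n]
        assoc_mult_mat[of _ "r + s" n _ n _ n])
  also have "\<dots> = calD r s a
      * (?S * circulant n (\<lambda>w. res_symb r s a z w * cnj (res_symb r s a z' w)) * transpose_mat ?S)
      * adj (calD r s a)"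
    by (simp add: compression_assoc[of _ "r + s" _ n] circulant_mult_circulant[OF n0])
  finally show ?thesis by (simp add: select_mat_circulant[OF n0])
qed

lemma B_n_eq_dft:
  assumes n: "r + s < n" and "z \<in> \<Gamma>" "z' \<in> \<Gamma>"
  shows "B_n r s a n z z' = adj (calE r s a)
    * mat (r + s) (r + s) (\<lambda>(u, v). dft_coeff n (\<lambda>w. res_symb r s a z w * cnj (res_symb r s a z' w))
        (int u - int v))
    * calE r s a"
proof -
  let ?S = "select_mat (r + s) n (\<lambda>u. int u - int s)"
  have n0: "n > 0" using n by simp
  have "B_n r s a n z z' = adj (calE r s a) * ?S
      * (circulant n (\<lambda>w. cnj (res_symb r s a z' w)) * circulant n (res_symb r s a z))
      * (transpose_mat ?S * calE r s a)"
    using assms by (simp add: B_n_def Pn_eq_select_calE resolv_eq_circulant_on adj_circulant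
        adj_mult[of _ n "r + s" _ "r + s"] mult_carrier_mat[of _ "r + s" "r + s" _ n]
        assoc_mult_mat[of _ "r + s" n _ n _ n])
  also have "\<dots> = adj (calE r s a)
      * (?S * circulant n (\<lambda>w. res_symb r s a z w * cnj (res_symb r s a z' w)) * transpose_mat ?S)
      * calE r s a"
    by (simp add: compression_assoc[of _ "r + s" _ n] circulant_mult_circulant[OF n0] mult.commute)
  finally show ?thesis by (simp add: select_mat_circulant[OF n0])
qed

lemma theta'_n_eq_twisted:
  assumes "n > 0" "z \<in> \<Gamma>" "z' \<in> \<Gamma>" "U \<in> carrier_mat n n"
  shows "theta'_n r s a U n z z' = tr (circulant n (res_symb r s a z) * (U * transpose_mat U)
      * circulant n (\<lambda>w. res_symb r s a z' (cnj w)) * (cmat U * adj U)) / of_nat n"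
  using assms by (simp add: theta'_n_def resolv_eq_circulant_on transpose_circulant
      trace_rotate[of _ n])

lemma A'_n_eq_twisted:
  assumes n: "r + s < n" and "z \<in> \<Gamma>" "z' \<in> \<Gamma>" "U \<in> carrier_mat n n"
  shows "A'_n r s a U n z z' = calD r s a
      * (select_mat (r + s) n (Q_index r s) * (circulant n (res_symb r s a z) * (U * transpose_mat U)
          * circulant n (\<lambda>w. res_symb r s a z' (cnj w)))
              * transpose_mat (select_mat (r + s) n (Q_index r s)))
      * transpose_mat (calD r s a)"
  using assms by (simp add: A'_n_def Qn_eq_calD_select resolv_eq_circulant_on transpose_circulant
      transpose_mult[of _ "r + s" "r + s" _ n] mult_carrier_mat[of _ "r + s" "r + s" _ n]
      mult_carrier_mat[of _ n n _ n] assoc_mult_mat[of _ "r + s" n _ n _ n] assoc_mult_mat[of _ n n _ n _ n]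
      flip: compression_assoc[of _ "r + s" _ n])

lemma B'_n_eq_twisted:
  assumes n: "r + s < n" and "z \<in> \<Gamma>" "z' \<in> \<Gamma>" "U \<in> carrier_mat n n"
  shows "B'_n r s a U n z z' = transpose_mat (calE r s a)
      * (select_mat (r + s) n (\<lambda>u. int u - int s) * (circulant n (\<lambda>w. res_symb r s a z' (cnj w))
          * (cmat U * adj U) * circulant n (res_symb r s a z))
              * transpose_mat (select_mat (r + s) n (\<lambda>u. int u - int s)))
      * calE r s a"
  using assms by (simp add: B'_n_def Pn_eq_select_calE resolv_eq_circulant_on transpose_circulant
      transpose_mult[of _ n "r + s" _ "r + s"] mult_carrier_mat[of _ "r + s" "r + s" _ n]
      mult_carrier_mat[of _ n n _ n] assoc_mult_mat[of _ "r + s" n _ n _ n] assoc_mult_mat[of _ n n _ n _ n]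
      flip: compression_assoc[of _ "r + s" _ n])

lemma theta'_n_fourier_eq_dft:
  assumes "n > 0" "z \<in> \<Gamma>" "z' \<in> \<Gamma>"
  shows "theta'_n r s a (fourier n) n z z'
      = dft_coeff n (\<lambda>w. res_symb r s a z w * res_symb r s a z' w) 0"
proof -
  have "circulant n (res_symb r s a z) * anticirculant n (\<lambda>_. 1)
      * circulant n (\<lambda>w. res_symb r s a z' (cnj w))
      * anticirculant n (\<lambda>_. 1) = circulant n (\<lambda>w. res_symb r s a z w * res_symb r s a z' w)"
    using assms(1) by (simp add: circulant_mult_anticirculant anticirculant_mult_circulant
        anticirculant_mult_anticirculant)
  then show ?thesis
    using assms by (simp add: theta'_n_eq_twisted fourier_twist trace_circulant)
qed

lemma theta'_n_orthogonal_eq_dft: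
  assumes "n > 0" "z \<in> \<Gamma>" "z' \<in> \<Gamma>" "real_orthogonal_cmat n U"
  shows "theta'_n r s a U n z z' = dft_coeff n (\<lambda>w. res_symb r s a z w * res_symb r s a z' (cnj w)) 0"
proof -
  have "U \<in> carrier_mat n n" using assms(4) by (simp add: real_orthogonal_cmat_def)
  then show ?thesis
    using assms by (simp add: theta'_n_eq_twisted real_orthogonal_twist
        circulant_mult_circulant trace_circulant)
qed

lemma A'_n_fourier_eq_dft:
  assumes "r + s < n" "z \<in> \<Gamma>" "z' \<in> \<Gamma>"
  shows "A'_n r s a (fourier n) n z z' = calD r s a
    * mat (r + s) (r + s) (\<lambda>(u, v). dft_coeff n (\<lambda>w. res_symb r s a z w * res_symb r s a z' w)
        (Q_index r s u + Q_index r s v))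
    * transpose_mat (calD r s a)"
proof -
  have "circulant n (res_symb r s a z) * anticirculant n (\<lambda>_. 1)
      * circulant n (\<lambda>w. res_symb r s a z' (cnj w))
      = anticirculant n (\<lambda>w. res_symb r s a z w * res_symb r s a z' w)"
    using assms(1) by (simp add: circulant_mult_anticirculant anticirculant_mult_circulant)
  then show ?thesis
    using assms by (simp add: A'_n_eq_twisted fourier_twist select_mat_anticirculant)
qed

lemma A'_n_orthogonal_eq_dft:
  assumes "r + s < n" "z \<in> \<Gamma>" "z' \<in> \<Gamma>" "real_orthogonal_cmat n U"
  shows "A'_n r s a U n z z' = calD r s a
    * mat (r + s) (r + s) (\<lambda>(u, v). dft_coeff n (\<lambda>w. res_symb r s a z w * res_symb r s a z' (cnj w))
        (Q_index r s u - Q_index r s v))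
    * transpose_mat (calD r s a)"
proof -
  have "U \<in> carrier_mat n n" using assms(4) by (simp add: real_orthogonal_cmat_def)
  then show ?thesis
    using assms by (simp add: A'_n_eq_twisted real_orthogonal_twist
        circulant_mult_circulant select_mat_circulant)
qed

lemma B'_n_fourier_eq_dft:
  assumes "r + s < n" "z \<in> \<Gamma>" "z' \<in> \<Gamma>"
  shows "B'_n r s a (fourier n) n z z' = transpose_mat (calE r s a)
    * mat (r + s) (r + s) (\<lambda>(u, v). dft_coeff n (\<lambda>w. res_symb r s a z w * res_symb r s a z' w)
        (2 * int s - int u - int v))
    * calE r s a"
proof -
  have n: "n > 0" using assms(1) by simp
  have "circulant n (\<lambda>w. res_symb r s a z' (cnj w)) * anticirculant n (\<lambda>_. 1)
      * circulant n (res_symb r s a z)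
      = anticirculant n (\<lambda>w. res_symb r s a z' (cnj w) * res_symb r s a z (cnj w))"
    using n by (simp add: circulant_mult_anticirculant anticirculant_mult_circulant)
  moreover have "dft_coeff n (\<lambda>w. res_symb r s a z' (cnj w) * res_symb r s a z (cnj w)) d
      = dft_coeff n (\<lambda>w. res_symb r s a z w * res_symb r s a z' w) (- d)" for d
    by (subst dft_coeff_reflect[OF n]) (simp add: mult.commute)
  ultimately show ?thesis
    using assms by (simp add: B'_n_eq_twisted fourier_twist select_mat_anticirculant diff_diff_eq)
qed

lemma B'_n_orthogonal_eq_dft:
  assumes "r + s < n" "z \<in> \<Gamma>" "z' \<in> \<Gamma>" "real_orthogonal_cmat n U"
  shows "B'_n r s a U n z z' = transpose_mat (calE r s a)
    * mat (r + s) (r + s) (\<lambda>(u, v). dft_coeff n (\<lambda>w. res_symb r s a z w * res_symb r s a z' (cnj w))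
        (int u - int v))
    * calE r s a"
proof -
  have "U \<in> carrier_mat n n" using assms(4) by (simp add: real_orthogonal_cmat_def)
  moreover have "circulant n (\<lambda>w. res_symb r s a z' (cnj w)) * 1\<^sub>m n * circulant n (res_symb r s a z)
      = circulant n (\<lambda>w. res_symb r s a z w * res_symb r s a z' (cnj w))"
    using assms(1) by (simp add: circulant_mult_circulant mult.commute)
  ultimately show ?thesis
    using assms by (simp add: B'_n_eq_twisted real_orthogonal_twist select_mat_circulant)
qed

end


section \<open>The limits\<close>

lemma oint_cong: "(\<And>w. w \<in> sphere 0 1 \<Longrightarrow> f w = g w) \<Longrightarrow> oint f = oint g"
  unfolding oint_def by (simp cong: integral_cong)

lemma moint_eq_mat_oint:
  fixes d :: "nat \<Rightarrow> nat \<Rightarrow> int"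
  assumes "\<And>w. M w \<in> carrier_mat k k"
    and "\<And>w u v. w \<in> sphere 0 1 \<Longrightarrow> u < k \<Longrightarrow> v < k \<Longrightarrow> M w $$ (u, v) = w powi d u v"
    and "\<And>w. w \<in> sphere 0 1 \<Longrightarrow> c w * w = g w"
  shows "moint k (\<lambda>w. c w \<cdot>\<^sub>m M w) = mat k k (\<lambda>(u, v). oint (\<lambda>w. g w * w powi d u v / w))"
  unfolding moint_def
proof (rule cong_mat)
  fix u v assume "u < k" "v < k"
  have "(c w \<cdot>\<^sub>m M w) $$ (u, v) = g w * w powi d u v / w" if w: "w \<in> sphere 0 1" for w
  proof -
    have "w \<noteq> 0" "dim_row (M w) = k" "dim_col (M w) = k" using w assms(1)[of w] by auto
    then show ?thesis
      using \<open>u < k\<close> \<open>v < k\<close> assms(2)[OF w] by (simp flip: assms(3)[OF w])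
  qed
  then show "(\<lambda>(u, v). oint (\<lambda>w. (c w \<cdot>\<^sub>m M w) $$ (u, v))) (u, v)
      = (\<lambda>(u, v). oint (\<lambda>w. g w * w powi d u v / w)) (u, v)"
    by (auto intro: oint_cong)
qed simp_all

lemma dgm_mult_index:
  assumes "M \<in> carrier_mat (r + s) m" "u < r + s" "j < m"
  shows "(dgm r s c * M) $$ (u, j) = (if u < s then 1 else c) * M $$ (u, j)"
  using assms by (simp add: dgm_def index_mult_mat_sum if_distrib[of "\<lambda>x. x * _"] sum.delta
      del: index_mult_mat(1) cong: if_cong)

lemma mult_dgm_index:
  assumes "M \<in> carrier_mat m (r + s)" "i < m" "v < r + s"
  shows "(M * dgm r s c) $$ (i, v) = M $$ (i, v) * (if v < s then 1 else c)"
  using assms by (simp add: dgm_def index_mult_mat_sum if_distrib[of "\<lambda>x. _ * x"] sum.delta'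
      del: index_mult_mat(1) cong: if_cong)

lemma dgm_powi_mult_entry:
  assumes "w \<noteq> 0" "M \<in> carrier_mat (r + s) (r + s)" "u < r + s" "v < r + s" "M $$ (u, v) = w powi p"
    and "(if u < s then 0 else e) + (if v < s then 0 else e') + p = q"
  shows "(dgm r s (w powi e) * M * dgm r s (w powi e')) $$ (u, v) = w powi q"
proof -
  have "dgm r s (w powi e) * M \<in> carrier_mat (r + s) (r + s)"
    using assms(2) by (simp add: dgm_def mult_carrier_mat[of _ "r + s" "r + s"])
  with assms have "(dgm r s (w powi e) * M * dgm r s (w powi e')) $$ (u, v)
      = w powi ((if u < s then 0 else e) + (if v < s then 0 else e')) * w powi p"
    by (simp add: mult_dgm_index dgm_mult_index power_int_add)
  with assms(1,6) show ?thesis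
    by (metis power_int_add)
qed

lemma A_lim_eq_oint:
  "A_lim r s a z z' = calD r s a
    * mat (r + s) (r + s) (\<lambda>(u, v). oint (\<lambda>w. res_symb r s a z w * cnj (res_symb r s a z' w)
        * w powi (Q_index r s u - Q_index r s v) / w))
    * adj (calD r s a)"
proof -
  let ?M = "\<lambda>w. dgm r s (w powi - int (r + s)) * calF (r + s) w * dgm r s (w powi int (r + s))"
  have "?M w $$ (u, v) = w powi (Q_index r s u - Q_index r s v)"
    if "w \<in> sphere 0 1" "u < r + s" "v < r + s" for w u v
  proof (rule dgm_powi_mult_entry)
    show "(if u < s then 0 else - int (r + s)) + (if v < s then 0 else int (r + s)) + (int u - int v)
        = Q_index r s u - Q_index r s v"
      by (simp add: Q_index_def)
  qed (use that in \<open>auto simp: calF_def simp del: power_int_of_nat\<close>)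
  moreover have "1 / (w * (z - symb r s a w) * cnj (z' - symb r s a w)) * w
      = res_symb r s a z w * cnj (res_symb r s a z' w)" if "w \<in> sphere 0 1" for w
    using that by (auto simp: res_symb_def)
  ultimately show ?thesis
    unfolding A_lim_def by (subst moint_eq_mat_oint) (auto simp: dgm_def calF_def)
qed

lemma B_lim_eq_oint:
  "B_lim r s a z z' = adj (calE r s a)
    * mat (r + s) (r + s) (\<lambda>(u, v). oint (\<lambda>w. res_symb r s a z w * cnj (res_symb r s a z' w)
        * w powi (int u - int v) / w))
    * calE r s a"
proof -
  have "1 / (w * (z - symb r s a w) * cnj (z' - symb r s a w)) * w
      = res_symb r s a z w * cnj (res_symb r s a z' w)" if "w \<in> sphere 0 1" for w
    using that by (auto simp: res_symb_def)
  then show ?thesis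
    unfolding B_lim_def by (subst moint_eq_mat_oint) (auto simp: calF_def simp del: power_int_of_nat)
qed

lemma inverse_eq_cnj_if_norm_1: "norm w = 1 \<Longrightarrow> inverse w = cnj w"
  by (metis complex_norm_square inverse_unique mult.commute mult_1 of_real_1 one_power2
      power2_eq_square)

lemma theta_lim_eq_oint:
  "theta_lim r s a z z' = oint (\<lambda>w. res_symb r s a z w * cnj (res_symb r s a z' w) * w powi 0 / w)"
  unfolding theta_lim_def by (rule oint_cong) (auto simp: res_symb_def)

lemma theta_eps_one_eq_oint:
  "theta_eps 1 r s a z z' = oint (\<lambda>w. res_symb r s a z w * res_symb r s a z' w * w powi 0 / w)"
  unfolding theta_eps_def by (rule oint_cong) (auto simp: res_symb_def)

lemma theta_eps_minus_one_eq_oint: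
  "theta_eps (-1) r s a z z'
      = oint (\<lambda>w. res_symb r s a z w * res_symb r s a z' (cnj w) * w powi 0 / w)"
  unfolding theta_eps_def by (rule oint_cong) (auto simp: res_symb_def inverse_eq_cnj_if_norm_1)

lemma A_eps_one_eq_oint:
  "A_eps 1 r s a z z' = calD r s a
    * mat (r + s) (r + s) (\<lambda>(u, v). oint (\<lambda>w. res_symb r s a z w * res_symb r s a z' w
        * w powi (Q_index r s u + Q_index r s v) / w))
    * transpose_mat (calD r s a)"
proof -
  let ?M = "\<lambda>w. dgm r s (w powi - int (r + s)) * calFeps 1 (r + s) w
      * dgm r s (w powi (- 1 * int (r + s)))"
  have "?M w $$ (u, v) = w powi (Q_index r s u + Q_index r s v)"
    if "w \<in> sphere 0 1" "u < r + s" "v < r + s" for w u v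
  proof (rule dgm_powi_mult_entry)
    show "(if u < s then 0 else - int (r + s)) + (if v < s then 0 else - 1 * int (r + s))
        + (int (u + 1) + int (v + 1) - 2) = Q_index r s u + Q_index r s v"
      by (simp add: Q_index_def)
  qed (use that in \<open>auto simp: calFeps_def calF1_def simp del: power_int_of_nat of_nat_add\<close>)
  moreover have "1 / (w * (z - symb r s a w) * (z' - symb r s a (w powi 1))) * w
      = res_symb r s a z w * res_symb r s a z' w" if "w \<in> sphere 0 1" for w
    using that by (auto simp: res_symb_def)
  ultimately show ?thesis
    unfolding A_eps_def by (subst moint_eq_mat_oint) (auto simp: dgm_def calFeps_def calF1_def)
qed

lemma A_eps_minus_one_eq_oint:
  "A_eps (-1) r s a z z' = calD r s a
    * mat (r + s) (r + s) (\<lambda>(u, v). oint (\<lambda>w. res_symb r s a z w * res_symb r s a z' (cnj w)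
        * w powi (Q_index r s u - Q_index r s v) / w))
    * transpose_mat (calD r s a)"
proof -
  let ?M = "\<lambda>w. dgm r s (w powi - int (r + s)) * calFeps (-1) (r + s) w
      * dgm r s (w powi (- (-1) * int (r + s)))"
  have "?M w $$ (u, v) = w powi (Q_index r s u - Q_index r s v)"
    if "w \<in> sphere 0 1" "u < r + s" "v < r + s" for w u v
  proof (rule dgm_powi_mult_entry)
    show "(if u < s then 0 else - int (r + s)) + (if v < s then 0 else - (-1) * int (r + s))
        + (int u - int v) = Q_index r s u - Q_index r s v"
      by (simp add: Q_index_def)
  qed (use that in \<open>auto simp: calFeps_def calF_def simp del: power_int_of_nat\<close>)
  moreover have "1 / (w * (z - symb r s a w) * (z' - symb r s a (w powi -1))) * w
      = res_symb r s a z w * res_symb r s a z' (cnj w)" if "w \<in> sphere 0 1" for w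
    using that by (auto simp: res_symb_def inverse_eq_cnj_if_norm_1)
  ultimately show ?thesis
    unfolding A_eps_def by (subst moint_eq_mat_oint) (auto simp: dgm_def calFeps_def calF_def)
qed

lemma B_eps_one_eq_oint:
  "B_eps 1 r s a z z' = transpose_mat (calE r s a)
    * mat (r + s) (r + s) (\<lambda>(u, v). oint (\<lambda>w. res_symb r s a z w * res_symb r s a z' w
        * w powi (2 * int s - int u - int v) / w))
    * calE r s a"
proof -
  have "1 / (w * (z - symb r s a w) * (z' - symb r s a (w powi 1))) * w
      = res_symb r s a z w * res_symb r s a z' w" if "w \<in> sphere 0 1" for w
    using that by (auto simp: res_symb_def)
  then show ?thesis
    unfolding B_eps_def
    by (subst moint_eq_mat_oint)
        (auto simp: calFeps'_def calF1'_def algebra_simps simp del: power_int_of_nat)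
qed

lemma B_eps_minus_one_eq_oint:
  "B_eps (-1) r s a z z' = transpose_mat (calE r s a)
    * mat (r + s) (r + s) (\<lambda>(u, v). oint (\<lambda>w. res_symb r s a z w * res_symb r s a z' (cnj w)
        * w powi (int u - int v) / w))
    * calE r s a"
proof -
  have "1 / (w * (z - symb r s a w) * (z' - symb r s a (w powi -1))) * w
      = res_symb r s a z w * res_symb r s a z' (cnj w)" if "w \<in> sphere 0 1" for w
    using that by (auto simp: res_symb_def inverse_eq_cnj_if_norm_1)
  then show ?thesis
    unfolding B_eps_def
    by (subst moint_eq_mat_oint) (auto simp: calFeps'_def calF_def simp del: power_int_of_nat)
qed

section \<open>Uniform convergence\<close>

context
  fixes r s :: nat and a :: "int \<Rightarrow> complex" and \<Gamma> :: "complex set"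
  assumes "compact \<Gamma>" and avoid: "\<Gamma> \<inter> symb r s a ` sphere 0 1 = {}"
begin

lemma continuous_on_res_symb [continuous_intros]:
  assumes "continuous_on S f" "continuous_on S w"
      "\<And>p. p \<in> S \<Longrightarrow> f p \<in> \<Gamma>" "\<And>p. p \<in> S \<Longrightarrow> w p \<in> sphere 0 1"
  shows "continuous_on S (\<lambda>p. res_symb r s a (f p) (w p))"
proof -
  have "w p \<noteq> 0" if "p \<in> S" for p
    using assms(4)[OF that] by auto
  then have "continuous_on S (\<lambda>p. symb r s a (w p))"
    unfolding symb_def using assms(2) by (intro continuous_intros) auto
  moreover have "f p - symb r s a (w p) \<noteq> 0" if "p \<in> S" for p
    using avoid assms(3,4)[OF that] by auto
  ultimately show ?thesis
    unfolding res_symb_def using assms(1) by (intro continuous_intros) auto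
qed

lemma theta_n_unif_conv: "unif_conv \<Gamma> (\<lambda>n. theta_n r s a n) (theta_lim r s a)"
proof (rule unif_conv_dft_coeff[where
      g = "\<lambda>p w. res_symb r s a (fst p) w * cnj (res_symb r s a (snd p) w)" and
      d = 0 and N = 1])
  show "continuous_on ((\<Gamma> \<times> \<Gamma>) \<times> sphere 0 1)
      (\<lambda>q. res_symb r s a (fst (fst q)) (snd q) * cnj (res_symb r s a (snd (fst q)) (snd q)))"
    by (intro continuous_intros) auto
qed (use \<open>compact \<Gamma>\<close> avoid in \<open>simp_all add: theta_n_eq_dft theta_lim_eq_oint\<close>)

lemma A_n_unif_conv: "unif_conv_mat (r + s) \<Gamma> (\<lambda>n. A_n r s a n) (A_lim r s a)"
proof (rule unif_conv_mat_dft_coeff[where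
      g = "\<lambda>p w. res_symb r s a (fst p) w * cnj (res_symb r s a (snd p) w)" and
      d = "\<lambda>u v. Q_index r s u - Q_index r s v" and N = "Suc (r + s)"])
  show "continuous_on ((\<Gamma> \<times> \<Gamma>) \<times> sphere 0 1)
      (\<lambda>q. res_symb r s a (fst (fst q)) (snd q) * cnj (res_symb r s a (snd (fst q)) (snd q)))"
    by (intro continuous_intros) auto
qed (use \<open>compact \<Gamma>\<close> avoid in \<open>simp_all add: A_n_eq_dft A_lim_eq_oint\<close>)

lemma B_n_unif_conv: "unif_conv_mat (r + s) \<Gamma> (\<lambda>n. B_n r s a n) (B_lim r s a)"
proof (rule unif_conv_mat_dft_coeff[where
      g = "\<lambda>p w. res_symb r s a (fst p) w * cnj (res_symb r s a (snd p) w)" and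
      d = "\<lambda>u v. int u - int v" and N = "Suc (r + s)"])
  show "continuous_on ((\<Gamma> \<times> \<Gamma>) \<times> sphere 0 1)
      (\<lambda>q. res_symb r s a (fst (fst q)) (snd q) * cnj (res_symb r s a (snd (fst q)) (snd q)))"
    by (intro continuous_intros) auto
qed (use \<open>compact \<Gamma>\<close> avoid in \<open>simp_all add: B_n_eq_dft B_lim_eq_oint\<close>)

lemma theta'_n_fourier_unif_conv: "unif_conv \<Gamma> (\<lambda>n. theta'_n r s a (fourier n) n) (theta_eps 1 r s a)"
proof (rule unif_conv_dft_coeff[where
      g = "\<lambda>p w. res_symb r s a (fst p) w * res_symb r s a (snd p) w" and
      d = 0 and N = 1])
  show "continuous_on ((\<Gamma> \<times> \<Gamma>) \<times> sphere 0 1)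
      (\<lambda>q. res_symb r s a (fst (fst q)) (snd q) * res_symb r s a (snd (fst q)) (snd q))"
    by (intro continuous_intros) auto
qed (use \<open>compact \<Gamma>\<close> avoid in \<open>simp_all add: theta'_n_fourier_eq_dft theta_eps_one_eq_oint\<close>)

lemma A'_n_fourier_unif_conv: "unif_conv_mat (r + s) \<Gamma> (\<lambda>n. A'_n r s a (fourier n) n) (A_eps 1 r s a)"
proof (rule unif_conv_mat_dft_coeff[where
      g = "\<lambda>p w. res_symb r s a (fst p) w * res_symb r s a (snd p) w" and
      d = "\<lambda>u v. Q_index r s u + Q_index r s v" and N = "Suc (r + s)"])
  show "continuous_on ((\<Gamma> \<times> \<Gamma>) \<times> sphere 0 1)
      (\<lambda>q. res_symb r s a (fst (fst q)) (snd q) * res_symb r s a (snd (fst q)) (snd q))"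
    by (intro continuous_intros) auto
qed (use \<open>compact \<Gamma>\<close> avoid in \<open>simp_all add: A'_n_fourier_eq_dft A_eps_one_eq_oint\<close>)

lemma B'_n_fourier_unif_conv: "unif_conv_mat (r + s) \<Gamma> (\<lambda>n. B'_n r s a (fourier n) n) (B_eps 1 r s a)"
proof (rule unif_conv_mat_dft_coeff[where
      g = "\<lambda>p w. res_symb r s a (fst p) w * res_symb r s a (snd p) w" and
      d = "\<lambda>u v. 2 * int s - int u - int v" and N = "Suc (r + s)"])
  show "continuous_on ((\<Gamma> \<times> \<Gamma>) \<times> sphere 0 1)
      (\<lambda>q. res_symb r s a (fst (fst q)) (snd q) * res_symb r s a (snd (fst q)) (snd q))"
    by (intro continuous_intros) auto
qed (use \<open>compact \<Gamma>\<close> avoid in \<open>simp_all add: B'_n_fourier_eq_dft B_eps_one_eq_oint\<close>)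

context
  fixes U :: "nat \<Rightarrow> complex mat"
  assumes orthogonal: "\<And>n. real_orthogonal_cmat n (U n)"
begin

lemma theta'_n_orthogonal_unif_conv: "unif_conv \<Gamma> (\<lambda>n. theta'_n r s a (U n) n) (theta_eps (-1) r s a)"
proof (rule unif_conv_dft_coeff[where
      g = "\<lambda>p w. res_symb r s a (fst p) w * res_symb r s a (snd p) (cnj w)" and
      d = 0 and N = 1])
  show "continuous_on ((\<Gamma> \<times> \<Gamma>) \<times> sphere 0 1)
      (\<lambda>q. res_symb r s a (fst (fst q)) (snd q) * res_symb r s a (snd (fst q)) (cnj (snd q)))"
    by (intro continuous_intros) auto
qed (use \<open>compact \<Gamma>\<close> avoid orthogonal in
    \<open>simp_all add: theta'_n_orthogonal_eq_dft theta_eps_minus_one_eq_oint\<close>)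

lemma A'_n_orthogonal_unif_conv: "unif_conv_mat (r + s) \<Gamma> (\<lambda>n. A'_n r s a (U n) n) (A_eps (-1) r s a)"
proof (rule unif_conv_mat_dft_coeff[where
      g = "\<lambda>p w. res_symb r s a (fst p) w * res_symb r s a (snd p) (cnj w)" and
      d = "\<lambda>u v. Q_index r s u - Q_index r s v" and N = "Suc (r + s)"])
  show "continuous_on ((\<Gamma> \<times> \<Gamma>) \<times> sphere 0 1)
      (\<lambda>q. res_symb r s a (fst (fst q)) (snd q) * res_symb r s a (snd (fst q)) (cnj (snd q)))"
    by (intro continuous_intros) auto
qed (use \<open>compact \<Gamma>\<close> avoid orthogonal in
    \<open>simp_all add: A'_n_orthogonal_eq_dft A_eps_minus_one_eq_oint\<close>)

lemma B'_n_orthogonal_unif_conv: "unif_conv_mat (r + s) \<Gamma> (\<lambda>n. B'_n r s a (U n) n) (B_eps (-1) r s a)"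
proof (rule unif_conv_mat_dft_coeff[where
      g = "\<lambda>p w. res_symb r s a (fst p) w * res_symb r s a (snd p) (cnj w)" and
      d = "\<lambda>u v. int u - int v" and N = "Suc (r + s)"])
  show "continuous_on ((\<Gamma> \<times> \<Gamma>) \<times> sphere 0 1)
      (\<lambda>q. res_symb r s a (fst (fst q)) (snd q) * res_symb r s a (snd (fst q)) (cnj (snd q)))"
    by (intro continuous_intros) auto
qed (use \<open>compact \<Gamma>\<close> avoid orthogonal in
    \<open>simp_all add: B'_n_orthogonal_eq_dft B_eps_minus_one_eq_oint\<close>)

end

end

theorem proposition5p7:
  fixes r s :: nat and a :: "int \<Rightarrow> complex" and \<Gamma> :: "complex set"
  assumes "s \<ge> 1" and "a (int s) \<noteq> 0"
    and "compact \<Gamma>" and "\<Gamma> \<inter> symb r s a ` sphere 0 1 = {}"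
  shows "unif_conv \<Gamma> (\<lambda>n. theta_n r s a n) (theta_lim r s a)
       \<and> unif_conv_mat (r+s) \<Gamma> (\<lambda>n. A_n r s a n) (A_lim r s a)
       \<and> unif_conv_mat (r+s) \<Gamma> (\<lambda>n. B_n r s a n) (B_lim r s a)
       \<and> (\<forall>(U :: nat \<Rightarrow> complex mat) (e :: int).
            ((\<forall>n. U n = fourier n) \<and> e = 1
             \<or> (\<forall>n. real_orthogonal_cmat n (U n)) \<and> e = -1) \<longrightarrow>
              unif_conv \<Gamma> (\<lambda>n. theta'_n r s a (U n) n) (theta_eps e r s a)
            \<and> unif_conv_mat (r+s) \<Gamma> (\<lambda>n. A'_n r s a (U n) n) (A_eps e r s a)
            \<and> unif_conv_mat (r+s) \<Gamma> (\<lambda>n. B'_n r s a (U n) n) (B_eps e r s a))"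
proof -
  note hyps = assms(3,4)
  have "unif_conv \<Gamma> (\<lambda>n. theta'_n r s a (U n) n) (theta_eps e r s a)
      \<and> unif_conv_mat (r+s) \<Gamma> (\<lambda>n. A'_n r s a (U n) n) (A_eps e r s a)
      \<and> unif_conv_mat (r+s) \<Gamma> (\<lambda>n. B'_n r s a (U n) n) (B_eps e r s a)"
    if "(\<forall>n. U n = fourier n) \<and> e = 1 \<or> (\<forall>n. real_orthogonal_cmat n (U n)) \<and> e = -1" for U e
    using that
  proof (elim disjE conjE)
    assume "\<forall>n. U n = fourier n" "e = 1"
    then show ?thesis
      using theta'_n_fourier_unif_conv[OF hyps] A'_n_fourier_unif_conv[OF hyps]
        B'_n_fourier_unif_conv[OF hyps] by simp
  next
    assume "\<forall>n. real_orthogonal_cmat n (U n)" "e = -1"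
    then show ?thesis
      using theta'_n_orthogonal_unif_conv[OF hyps] A'_n_orthogonal_unif_conv[OF hyps]
        B'_n_orthogonal_unif_conv[OF hyps] by simp
  qed
  then show ?thesis
    using theta_n_unif_conv[OF hyps] A_n_unif_conv[OF hyps] B_n_unif_conv[OF hyps] by blast
qed
end
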